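(* Let $N\ge1$ and let $\hat\Phi\in\mathrm H(\mathbb C_N^{\otimes2})$ be a random self-adjoint tensor with partition function $$\mathcal Z_{\hat{\rm H}\rm T}(\lambda)=\int_{\mathrm H(\mathbb C_N^{\otimes2})}\mathcal D\hat\Phi\;e^{-\frac N2\mathrm{Tr}(\hat\Phi^2)+\hat V_4(\lambda)},$$ $$\hat V_4(\lambda)=N\frac{\lambda}{2}\sum_{a_2,a_3,b_2,b_3}\Big(\hat\Phi^{b_2b_3}_{a_2a_3}\hat\Phi^{a_2a_3}_{b_2b_3}+\hat\Phi^{b_2a_3}_{a_2a_3}\hat\Phi^{a_2b_3}_{b_2b_3}+\hat\Phi^{a_2b_3}_{a_2a_3}\hat\Phi^{b_2a_3}_{b_2b_3}\Big).$$ Then $$\frac{\mathcal Z_{\hat{\rm H}\rm T}(\lambda)}{\mathcal Z_{\hat{\rm H}\rm T}(0)}=(1-\lambda)^{-\frac12(N^2-1)^2}\,(1-(1+N)\lambda)^{-(N^2-1)}\,(1-(1+2N)\lambda)^{-\frac12}.$$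
   Context: $\mathrm H(\mathbb C_N^{\otimes2})$ is the space of operators on $\mathbb C_N\otimes\mathbb C_N$ with components $\hat\Phi^{a_2a_3}_{b_2b_3}$ satisfying $\hat\Phi^{a_2a_3}_{b_2b_3}=\overline{\hat\Phi^{b_2b_3}_{a_2a_3}}$, with measure $\prod_{(a_2,a_3)\le(b_2,b_3)}d\hat\Phi^{a_2a_3}_{b_2b_3}$ (lexicographic order). $\mathrm{Tr}(\hat\Phi^2)=\sum\hat\Phi^{a_2a_3}_{b_2b_3}\hat\Phi^{b_2b_3}_{a_2a_3}$. *)

theory Defs
  imports "HOL-Analysis.Analysis"
begin

text \<open>Basis indices of C_N (x) C_N: pairs (a2,a3) with a2,a3 < N.\<close>
type_synonym idx = "nat \<times> nat"

definition idxs :: "nat \<Rightarrow> idx set" where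
  "idxs N = {0..<N} \<times> {0..<N}"

definition lex_less :: "idx \<Rightarrow> idx \<Rightarrow> bool" where
  "lex_less p q \<longleftrightarrow> fst p < fst q \<or> (fst p = fst q \<and> snd p < snd q)"

text \<open>Real coordinates of a self-adjoint operator: for p = q the (real) diagonal entry
  (flag False); for p < q (lexicographically) the real part (flag False) and the
  imaginary part (flag True) of the entry Phi^p_q.  The measure
  prod_{p \<le> q} dPhi^p_q is Lebesgue measure in these coordinates.\<close>
definition coords :: "nat \<Rightarrow> (idx \<times> idx \<times> bool) set" where
  "coords N = {(p, q, False) | p q. p \<in> idxs N \<and> q \<in> idxs N \<and> (p = q \<or> lex_less p q)}
            \<union> {(p, q, True) | p q. p \<in> idxs N \<and> q \<in> idxs N \<and> lex_less p q}"

text \<open>The self-adjoint operator with given coordinates; herm_of x p q is the component Phi^p_q.\<close>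
definition herm_of :: "(idx \<times> idx \<times> bool \<Rightarrow> real) \<Rightarrow> idx \<Rightarrow> idx \<Rightarrow> complex" where
  "herm_of x p q =
     (if p = q then complex_of_real (x (p, p, False))
      else if lex_less p q then Complex (x (p, q, False)) (x (p, q, True))
      else Complex (x (q, p, False)) (- x (q, p, True)))"

definition tr_sq :: "nat \<Rightarrow> (idx \<Rightarrow> idx \<Rightarrow> complex) \<Rightarrow> complex" where
  "tr_sq N \<Phi> = (\<Sum>a\<in>idxs N. \<Sum>b\<in>idxs N. \<Phi> a b * \<Phi> b a)"

definition V4 :: "nat \<Rightarrow> real \<Rightarrow> (idx \<Rightarrow> idx \<Rightarrow> complex) \<Rightarrow> complex" where
  "V4 N lam \<Phi> = of_real (real N * lam / 2) *
     (\<Sum>a2<N. \<Sum>a3<N. \<Sum>b2<N. \<Sum>b3<N.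
        \<Phi> (b2, b3) (a2, a3) * \<Phi> (a2, a3) (b2, b3)
      + \<Phi> (b2, a3) (a2, a3) * \<Phi> (a2, b3) (b2, b3)
      + \<Phi> (a2, b3) (a2, a3) * \<Phi> (b2, a3) (b2, b3))"

definition Z_HT :: "nat \<Rightarrow> real \<Rightarrow> complex" where
  "Z_HT N lam = integral\<^sup>L (PiM (coords N) (\<lambda>_. lborel))
     (\<lambda>x. exp (- (of_nat N / 2) * tr_sq N (herm_of x) + V4 N lam (herm_of x)))"

end

(* In the real coordinates of the Hermitian matrix the exponent -N/2 Tr(Phi^2) + V4 is minus a
   real quadratic form which splits into independent blocks: for i < j the (real or imaginary parts
   of the) entries Phi^(i,k)_(j,l) carry N(1-lam)|x|^2 - N lam (sum_k x_kk)^2, for k < l the entries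
   Phi^(i,k)_(i,l) carry N(1-lam)|x|^2 - N lam (sum_i x_i)^2, and the diagonal entries carry a form on
   an N x N grid penalising row and column sums.  The partition function is thus a product of
   Gaussian integrals sqrt(pi^d / det).  A rank-one perturbation of a multiple of the identity is
   integrated one coordinate at a time by completing the square; the grid form is integrated row by
   row, each row being a rank-one problem whose Schur complement is again a grid form with updated
   coefficients.  All determinants are products of powers of 1 - lam, 1 - (1+N) lam and
   1 - (1+2N) lam, and counting the blocks gives the exponents. *)

theory Submission
  imports Defs "HOL-Probability.Probability"
begin

section \<open>Integrals over disjoint blocks of coordinates\<close>

lemma measurable_PiM_local:
  assumes "B \<subseteq> A" "f \<in> measurable (PiM B M) N" "\<And>x y. (\<And>c. c \<in> B \<Longrightarrow> x c = y c) \<Longrightarrow> f x = f y"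
  shows "f \<in> measurable (PiM A M) N"
proof -
  have "f = (\<lambda>x. f (restrict x B))"
    by (rule ext, rule assms(3)) simp
  then show ?thesis
    using measurable_comp[OF measurable_restrict_subset[OF assms(1)] assms(2)] by (simp add: comp_def)
qed

lemma measurable_PiM_prod_local:
  fixes f :: "'j \<Rightarrow> ('i \<Rightarrow> 'a) \<Rightarrow> ennreal"
  assumes "\<And>j. j \<in> J \<Longrightarrow> B j \<subseteq> A" "\<And>j. j \<in> J \<Longrightarrow> f j \<in> borel_measurable (PiM (B j) M)"
    "\<And>j x y. j \<in> J \<Longrightarrow> (\<And>c. c \<in> B j \<Longrightarrow> x c = y c) \<Longrightarrow> f j x = f j y"
  shows "(\<lambda>x. \<Prod>j\<in>J. f j x) \<in> borel_measurable (PiM A M)"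
proof (rule borel_measurable_prod_ennreal)
  fix j assume j: "j \<in> J"
  show "f j \<in> borel_measurable (PiM A M)"
  proof (rule measurable_PiM_local[OF assms(1)[OF j] assms(2)[OF j]])
    show "f j x = f j y" if "\<And>c. c \<in> B j \<Longrightarrow> x c = y c" for x y
      using j that by (rule assms(3))
  qed
qed

lemma (in product_sigma_finite) nn_integral_PiM_Un_mult:
  fixes f g :: "('i \<Rightarrow> 'a) \<Rightarrow> ennreal"
  assumes IJ: "I \<inter> J = {}" "finite I" "finite J"
    and meas: "f \<in> borel_measurable (PiM I M)" "g \<in> borel_measurable (PiM J M)"
    and local: "\<And>x y. (\<And>c. c \<in> I \<Longrightarrow> x c = y c) \<Longrightarrow> f x = f y"
      "\<And>x y. (\<And>c. c \<in> J \<Longrightarrow> x c = y c) \<Longrightarrow> g x = g y"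
  shows "(\<integral>\<^sup>+x. f x * g x \<partial>PiM (I \<union> J) M) = (\<integral>\<^sup>+x. f x \<partial>PiM I M) * (\<integral>\<^sup>+x. g x \<partial>PiM J M)"
proof -
  have "(\<lambda>x. f x * g x) \<in> borel_measurable (PiM (I \<union> J) M)"
    using measurable_PiM_local[OF _ meas(1) local(1), of "I \<union> J"]
      measurable_PiM_local[OF _ meas(2) local(2), of "I \<union> J"] by simp
  then have "(\<integral>\<^sup>+x. f x * g x \<partial>PiM (I \<union> J) M)
      = (\<integral>\<^sup>+x. (\<integral>\<^sup>+y. f (merge I J (x, y)) * g (merge I J (x, y)) \<partial>PiM J M) \<partial>PiM I M)"
    by (rule product_nn_integral_fold[OF IJ])
  also have "\<dots> = (\<integral>\<^sup>+x. f x * (\<integral>\<^sup>+y. g y \<partial>PiM J M) \<partial>PiM I M)"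
  proof (rule nn_integral_cong)
    fix x
    have "f (merge I J (x, y)) = f x" "g (merge I J (x, y)) = g y" for y
      using IJ(1) by (auto intro!: local simp: merge_def)
    then show "(\<integral>\<^sup>+y. f (merge I J (x, y)) * g (merge I J (x, y)) \<partial>PiM J M) = f x * (\<integral>\<^sup>+y. g y \<partial>PiM J M)"
      using meas(2) by (simp add: nn_integral_cmult)
  qed
  also have "\<dots> = (\<integral>\<^sup>+x. f x \<partial>PiM I M) * (\<integral>\<^sup>+x. g x \<partial>PiM J M)"
    using meas(1) by (rule nn_integral_multc)
  finally show ?thesis .
qed

lemma (in product_sigma_finite) nn_integral_PiM_UNION_prod:
  fixes B :: "'j \<Rightarrow> 'i set" and f :: "'j \<Rightarrow> ('i \<Rightarrow> 'a) \<Rightarrow> ennreal"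
  assumes "finite J" "\<And>j. j \<in> J \<Longrightarrow> finite (B j)" "disjoint_family_on B J"
    "\<And>j. j \<in> J \<Longrightarrow> f j \<in> borel_measurable (PiM (B j) M)"
    "\<And>j x y. j \<in> J \<Longrightarrow> (\<And>c. c \<in> B j \<Longrightarrow> x c = y c) \<Longrightarrow> f j x = f j y"
  shows "(\<integral>\<^sup>+x. (\<Prod>j\<in>J. f j x) \<partial>PiM (\<Union>j\<in>J. B j) M) = (\<Prod>j\<in>J. \<integral>\<^sup>+x. f j x \<partial>PiM (B j) M)"
  using assms
proof (induction J rule: finite_induct)
  case empty
  show ?case by (simp add: space_PiM_empty)
next
  case (insert j J)
  define U where "U = (\<Union>i\<in>J. B i)"
  have disj: "B j \<inter> U = {}"
    using insert.prems(2) insert.hyps(2) unfolding U_def disjoint_family_on_def by fastforce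
  have fin: "finite (B j)" "finite U"
    using insert.hyps(1) insert.prems(1) by (auto simp: U_def)
  have meas_j: "f j \<in> borel_measurable (PiM (B j) M)"
    using insert.prems(3) by simp
  have local_j: "f j x = f j y" if "\<And>c. c \<in> B j \<Longrightarrow> x c = y c" for x y
    using that by (intro insert.prems(4)) auto
  have local_U: "(\<Prod>i\<in>J. f i x) = (\<Prod>i\<in>J. f i y)" if "\<And>c. c \<in> U \<Longrightarrow> x c = y c" for x y
  proof (rule prod.cong[OF refl])
    fix i assume "i \<in> J"
    then show "f i x = f i y"
      using that by (intro insert.prems(4)) (auto simp: U_def)
  qed
  have meas_U: "(\<lambda>x. \<Prod>i\<in>J. f i x) \<in> borel_measurable (PiM U M)"
  proof (rule measurable_PiM_prod_local)
    show "f i x = f i y" if "i \<in> J" "\<And>c. c \<in> B i \<Longrightarrow> x c = y c" for i x y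
      using that by (intro insert.prems(4)) auto
  qed (use insert.prems(3) in \<open>auto simp: U_def\<close>)
  have IH: "(\<integral>\<^sup>+x. (\<Prod>i\<in>J. f i x) \<partial>PiM U M) = (\<Prod>i\<in>J. \<integral>\<^sup>+x. f i x \<partial>PiM (B i) M)"
    unfolding U_def
  proof (rule insert.IH)
    show "disjoint_family_on B J"
      using insert.prems(2) by (auto simp: disjoint_family_on_def)
    show "f i x = f i y" if "i \<in> J" "\<And>c. c \<in> B i \<Longrightarrow> x c = y c" for i x y
      using that by (intro insert.prems(4)) auto
  qed (use insert.prems(1,3) in simp_all)
  have "(\<integral>\<^sup>+x. (\<Prod>i\<in>insert j J. f i x) \<partial>PiM (B j \<union> U) M)
      = (\<integral>\<^sup>+x. f j x \<partial>PiM (B j) M) * (\<integral>\<^sup>+x. (\<Prod>i\<in>J. f i x) \<partial>PiM U M)"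
    unfolding prod.insert[OF insert.hyps]
    by (rule nn_integral_PiM_Un_mult[OF disj fin meas_j meas_U local_j local_U])
  then show ?case
    unfolding IH using insert.hyps by (simp add: U_def)
qed

section \<open>Gaussian integrals of rank-one forms\<close>

lemma nn_integral_exp_neg_quadratic:
  fixes D c :: real
  assumes D: "D > 0"
  shows "(\<integral>\<^sup>+y. ennreal (exp (- (D * y\<^sup>2 - 2 * c * y))) \<partial>lborel)
          = ennreal (sqrt (pi / D) * exp (c\<^sup>2 / D))"
proof -
  define \<sigma> where "\<sigma> = sqrt (1 / (2 * D))"
  have \<sigma>: "\<sigma> > 0" and \<sigma>2: "\<sigma>\<^sup>2 = 1 / (2 * D)" using D by (simp_all add: \<sigma>_def)
  have density: "exp (- (D * y\<^sup>2 - 2 * c * y))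
      = sqrt (pi / D) * exp (c\<^sup>2 / D) * normal_density (c / D) \<sigma> y" for y
  proof -
    have "2 * pi * \<sigma>\<^sup>2 = pi / D" using \<sigma>2 D by (simp add: field_simps)
    moreover have "- (y - c / D)\<^sup>2 / (2 * \<sigma>\<^sup>2) = - (D * y\<^sup>2 - 2 * c * y) - c\<^sup>2 / D"
      using \<sigma>2 D by (simp add: field_simps power2_eq_square)
    ultimately show ?thesis
      using D by (simp add: normal_density_def exp_diff)
  qed
  have "(\<integral>\<^sup>+y. ennreal (exp (- (D * y\<^sup>2 - 2 * c * y))) \<partial>lborel)
      = ennreal (sqrt (pi / D) * exp (c\<^sup>2 / D)) * (\<integral>\<^sup>+y. ennreal (normal_density (c / D) \<sigma> y) \<partial>lborel)"
    unfolding density using D by (simp add: ennreal_mult nn_integral_cmult)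
  also have "(\<integral>\<^sup>+y. ennreal (normal_density (c / D) \<sigma> y) \<partial>lborel) = 1"
    using \<sigma> by (subst nn_integral_eq_integral) (auto simp: integrable_normal_density integral_normal_density)
  finally show ?thesis by simp
qed

definition rank_one_form ::
    "real \<Rightarrow> real \<Rightarrow> ('k \<Rightarrow> real) \<Rightarrow> ('k \<Rightarrow> real) \<Rightarrow> 'k set \<Rightarrow> ('k \<Rightarrow> real) \<Rightarrow> real" where
  "rank_one_form \<alpha> \<beta> u w K y =
     \<alpha> * (\<Sum>k\<in>K. (y k)\<^sup>2) - \<beta> * (\<Sum>k\<in>K. u k * y k)\<^sup>2 - 2 * (\<Sum>k\<in>K. w k * y k)"

lemma rank_one_form_cong:
  "(\<And>k. k \<in> K \<Longrightarrow> y k = z k) \<Longrightarrow> rank_one_form \<alpha> \<beta> u w K y = rank_one_form \<alpha> \<beta> u w K z"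
  by (simp add: rank_one_form_def cong: sum.cong)

lemma borel_measurable_rank_one_form [measurable]:
  "(\<lambda>x. rank_one_form \<alpha> \<beta> u w K (\<lambda>k. x (h k))) \<in> borel_measurable (PiM (h ` K) (\<lambda>_. lborel))"
  unfolding rank_one_form_def by measurable

lemma rank_one_form_insert:
  assumes "finite K" "i \<notin> K"
  shows "rank_one_form \<alpha> \<beta> u w (insert i K) (y(i := t))
       = (\<alpha> - \<beta> * (u i)\<^sup>2) * t\<^sup>2 - 2 * (\<beta> * u i * (\<Sum>k\<in>K. u k * y k) + w i) * t
         + rank_one_form \<alpha> \<beta> u w K y"
proof -
  have "rank_one_form \<alpha> \<beta> u w K (y(i := t)) = rank_one_form \<alpha> \<beta> u w K y"
    using assms(2) by (intro rank_one_form_cong) auto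
  moreover have "(\<Sum>k\<in>K. g k * (y(i := t)) k) = (\<Sum>k\<in>K. g k * y k)" for g
    using assms(2) by (intro sum.cong) auto
  ultimately show ?thesis
    using assms by (simp add: rank_one_form_def power2_eq_square algebra_simps)
qed

lemma rank_one_form_complete_square:
  assumes D: "D = \<alpha> - \<beta> * (u i)\<^sup>2" "D \<noteq> 0"
  shows "(\<beta> * u i * (\<Sum>k\<in>K. u k * y k) + w i)\<^sup>2 / D - rank_one_form \<alpha> \<beta> u w K y
       = (w i)\<^sup>2 / D - rank_one_form \<alpha> (\<alpha> * \<beta> / D) u (\<lambda>k. w k + \<beta> * u i * w i / D * u k) K y"
proof -
  define S where "S = (\<Sum>k\<in>K. u k * y k)"
  have lin: "(\<Sum>k\<in>K. (w k + \<beta> * u i * w i / D * u k) * y k) = (\<Sum>k\<in>K. w k * y k) + \<beta> * u i * w i / D * S"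
    by (simp add: S_def algebra_simps sum.distrib sum_distrib_left sum_divide_distrib)
  have "\<alpha> * \<beta> / D = \<beta> + \<beta> * \<beta> * (u i)\<^sup>2 / D"
    using D(2) by (simp add: D(1) field_simps power2_eq_square)
  then show ?thesis
    unfolding rank_one_form_def lin S_def[symmetric] using D(2)
    by (simp add: field_simps power2_eq_square)
qed

lemma rank_one_gauss_value_insert:
  fixes \<alpha> \<beta> v \<omega> U W Y :: real
  assumes \<alpha>: "\<alpha> > 0" and D: "D = \<alpha> - \<beta> * v\<^sup>2" "D > 0" and X: "X = \<alpha> - \<beta> * (v\<^sup>2 + U)" "X > 0"
    and c: "c = \<beta> * v * \<omega> / D"
  shows "sqrt (pi / D) * exp (\<omega>\<^sup>2 / D)
         * (sqrt (pi / \<alpha>) ^ n * sqrt (\<alpha> / (\<alpha> - \<alpha> * \<beta> / D * U))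
            * exp ((W + 2 * c * Y + c\<^sup>2 * U) / \<alpha> + \<alpha> * \<beta> / D * (Y + c * U)\<^sup>2 / (\<alpha> * (\<alpha> - \<alpha> * \<beta> / D * U))))
       = sqrt (pi / \<alpha>) ^ Suc n * sqrt (\<alpha> / X) * exp ((\<omega>\<^sup>2 + W) / \<alpha> + \<beta> * (v * \<omega> + Y)\<^sup>2 / (\<alpha> * X))"
    (is "?L = ?R")
proof -
  define E where "E = (W + 2 * c * Y + c\<^sup>2 * U) / \<alpha> + \<alpha> * \<beta> / D * (Y + c * U)\<^sup>2 / (\<alpha> * (\<alpha> - \<alpha> * \<beta> / D * U))"
  have nz: "D \<noteq> 0" "X \<noteq> 0" "\<alpha> \<noteq> 0" using \<alpha> D(2) X(2) by auto
  have schur: "\<alpha> - \<alpha> * \<beta> / D * U = \<alpha> * X / D"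
    using nz by (simp add: D(1) X(1) field_simps)
  have sq: "sqrt (pi / D) * sqrt (\<alpha> / (\<alpha> - \<alpha> * \<beta> / D * U)) = sqrt (pi / \<alpha>) * sqrt (\<alpha> / X)"
    unfolding schur using \<alpha> D(2) X(2) by (simp add: real_sqrt_mult[symmetric] field_simps)
  have ex: "\<omega>\<^sup>2 / D + E = (\<omega>\<^sup>2 + W) / \<alpha> + \<beta> * (v * \<omega> + Y)\<^sup>2 / (\<alpha> * X)"
  proof -
    have "\<alpha> * \<beta> / D * (Y + c * U)\<^sup>2 / (\<alpha> * (\<alpha> * X / D)) = \<beta> * (Y + c * U)\<^sup>2 / (\<alpha> * X)"
      using nz by (simp add: field_simps power2_eq_square)
    then have "(\<omega>\<^sup>2 / D + E) * (\<alpha> * X * D\<^sup>2) = \<alpha> * X * \<omega>\<^sup>2 * D + X * W * D\<^sup>2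
        + (X * (2 * (\<beta> * v * \<omega>) * Y * D + (\<beta> * v * \<omega>)\<^sup>2 * U) + \<beta> * (Y * D + \<beta> * v * \<omega> * U)\<^sup>2)"
      using nz unfolding E_def schur c by (simp add: field_simps power2_eq_square)
    also have "X * (2 * (\<beta> * v * \<omega>) * Y * D + (\<beta> * v * \<omega>)\<^sup>2 * U) + \<beta> * (Y * D + \<beta> * v * \<omega> * U)\<^sup>2
        = X * \<omega>\<^sup>2 * D\<^sup>2 + \<beta> * (v * \<omega> + Y)\<^sup>2 * D\<^sup>2 - \<alpha> * X * \<omega>\<^sup>2 * D"
      unfolding D(1) X(1) by algebra
    also have "\<alpha> * X * \<omega>\<^sup>2 * D + X * W * D\<^sup>2 + (X * \<omega>\<^sup>2 * D\<^sup>2 + \<beta> * (v * \<omega> + Y)\<^sup>2 * D\<^sup>2 - \<alpha> * X * \<omega>\<^sup>2 * D)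
        = ((\<omega>\<^sup>2 + W) / \<alpha> + \<beta> * (v * \<omega> + Y)\<^sup>2 / (\<alpha> * X)) * (\<alpha> * X * D\<^sup>2)"
      using nz by (simp add: field_simps power2_eq_square)
    finally show ?thesis using nz by simp
  qed
  have "?L = (sqrt (pi / D) * sqrt (\<alpha> / (\<alpha> - \<alpha> * \<beta> / D * U))) * sqrt (pi / \<alpha>) ^ n * exp (\<omega>\<^sup>2 / D + E)"
    unfolding E_def exp_add by (simp only: mult_ac)
  also have "\<dots> = ?R"
    unfolding sq ex power_Suc by (simp only: mult_ac)
  finally show ?thesis .
qed

lemma diff_mult_pos_of_le:
  fixes c d s t :: real
  assumes "0 \<le> s" "s \<le> t" "0 < c" "0 < c - t * d"
  shows "0 < c - s * d"
proof (cases "d \<le> 0")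
  case True
  then show ?thesis using assms mult_nonneg_nonpos[of s d] by linarith
next
  case False
  then show ?thesis using assms mult_right_mono[of s t d] by linarith
qed

lemma nn_integral_exp_neg_rank_one_form_insert:
  fixes y u w :: "'k \<Rightarrow> real"
  assumes K: "finite K" "i \<notin> K" and D: "D = \<alpha> - \<beta> * (u i)\<^sup>2" "D > 0"
  shows "(\<integral>\<^sup>+t. ennreal (exp (- rank_one_form \<alpha> \<beta> u w (insert i K) (y(i := t)))) \<partial>lborel)
       = ennreal (sqrt (pi / D) * exp ((w i)\<^sup>2 / D))
         * ennreal (exp (- rank_one_form \<alpha> (\<alpha> * \<beta> / D) u (\<lambda>k. w k + \<beta> * u i * w i / D * u k) K y))"
proof -
  define b where "b = \<beta> * u i * (\<Sum>k\<in>K. u k * y k) + w i"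
  have "(\<integral>\<^sup>+t. ennreal (exp (- rank_one_form \<alpha> \<beta> u w (insert i K) (y(i := t)))) \<partial>lborel)
      = (\<integral>\<^sup>+t. ennreal (exp (- (D * t\<^sup>2 - 2 * b * t))) * ennreal (exp (- rank_one_form \<alpha> \<beta> u w K y)) \<partial>lborel)"
    unfolding rank_one_form_insert[OF K] D(1)[symmetric] b_def[symmetric] minus_add_distrib exp_add
    by (simp add: ennreal_mult')
  also have "\<dots> = ennreal (sqrt (pi / D) * exp (b\<^sup>2 / D)) * ennreal (exp (- rank_one_form \<alpha> \<beta> u w K y))"
    using nn_integral_exp_neg_quadratic[OF D(2), of b] by (simp add: nn_integral_multc)
  also have "\<dots> = ennreal (sqrt (pi / D) * exp ((w i)\<^sup>2 / D))
      * ennreal (exp (- rank_one_form \<alpha> (\<alpha> * \<beta> / D) u (\<lambda>k. w k + \<beta> * u i * w i / D * u k) K y))"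
  proof -
    have "b\<^sup>2 / D - rank_one_form \<alpha> \<beta> u w K y
        = (w i)\<^sup>2 / D - rank_one_form \<alpha> (\<alpha> * \<beta> / D) u (\<lambda>k. w k + \<beta> * u i * w i / D * u k) K y"
      unfolding b_def using D by (intro rank_one_form_complete_square) auto
    then have "exp (b\<^sup>2 / D) * exp (- rank_one_form \<alpha> \<beta> u w K y)
        = exp ((w i)\<^sup>2 / D) * exp (- rank_one_form \<alpha> (\<alpha> * \<beta> / D) u (\<lambda>k. w k + \<beta> * u i * w i / D * u k) K y)"
      by (simp add: exp_add[symmetric])
    then show ?thesis
      using D(2) by (simp add: ennreal_mult[symmetric] mult.assoc)
  qed
  finally show ?thesis .
qed

lemma nn_integral_exp_neg_rank_one_form_step:
  fixes K :: "'k set" and h :: "'k \<Rightarrow> 'c" and u w :: "'k \<Rightarrow> real"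
  assumes K: "finite K" "i \<notin> K" "inj_on h (insert i K)" and D: "D = \<alpha> - \<beta> * (u i)\<^sup>2" "D > 0"
  shows "(\<integral>\<^sup>+x. ennreal (exp (- rank_one_form \<alpha> \<beta> u w (insert i K) (\<lambda>k. x (h k)))) \<partial>PiM (h ` insert i K) (\<lambda>_. lborel))
       = ennreal (sqrt (pi / D) * exp ((w i)\<^sup>2 / D))
         * (\<integral>\<^sup>+x. ennreal (exp (- rank_one_form \<alpha> (\<alpha> * \<beta> / D) u (\<lambda>k. w k + \<beta> * u i * w i / D * u k) K
                  (\<lambda>k. x (h k)))) \<partial>PiM (h ` K) (\<lambda>_. lborel))"
proof -
  interpret product_sigma_finite "\<lambda>_. lborel :: real measure" by standard
  have "h i \<notin> h ` K" using K by (auto simp: inj_on_def)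
  moreover have "(\<lambda>x. ennreal (exp (- rank_one_form \<alpha> \<beta> u w (insert i K) (\<lambda>k. x (h k)))))
      \<in> borel_measurable (PiM (insert (h i) (h ` K)) (\<lambda>_. lborel))"
    unfolding image_insert[symmetric] by measurable
  ultimately have "(\<integral>\<^sup>+x. ennreal (exp (- rank_one_form \<alpha> \<beta> u w (insert i K) (\<lambda>k. x (h k)))) \<partial>PiM (h ` insert i K) (\<lambda>_. lborel))
      = (\<integral>\<^sup>+x. (\<integral>\<^sup>+t. ennreal (exp (- rank_one_form \<alpha> \<beta> u w (insert i K) (\<lambda>k. (x(h i := t)) (h k)))) \<partial>lborel)
           \<partial>PiM (h ` K) (\<lambda>_. lborel))"
    unfolding image_insert using K(1) by (intro product_nn_integral_insert) auto
  moreover have "rank_one_form \<alpha> \<beta> u w (insert i K) (\<lambda>k. (x(h i := t)) (h k))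
      = rank_one_form \<alpha> \<beta> u w (insert i K) ((\<lambda>k. x (h k))(i := t))" for x t
    using K(3) by (intro rank_one_form_cong) (auto simp: inj_on_def)
  ultimately show ?thesis
    by (simp add: nn_integral_exp_neg_rank_one_form_insert[of K i D \<alpha> \<beta> u, OF K(1,2) D] nn_integral_cmult)
qed

lemma nn_integral_exp_neg_rank_one_form:
  fixes K :: "'k set" and h :: "'k \<Rightarrow> 'c" and u w :: "'k \<Rightarrow> real"
  assumes "finite K" "inj_on h K" "\<alpha> > 0" "\<alpha> - \<beta> * (\<Sum>k\<in>K. (u k)\<^sup>2) > 0"
  shows "(\<integral>\<^sup>+x. ennreal (exp (- rank_one_form \<alpha> \<beta> u w K (\<lambda>k. x (h k)))) \<partial>PiM (h ` K) (\<lambda>_. lborel))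
    = ennreal (sqrt (pi / \<alpha>) ^ card K * sqrt (\<alpha> / (\<alpha> - \<beta> * (\<Sum>k\<in>K. (u k)\<^sup>2)))
       * exp ((\<Sum>k\<in>K. (w k)\<^sup>2) / \<alpha>
              + \<beta> * (\<Sum>k\<in>K. u k * w k)\<^sup>2 / (\<alpha> * (\<alpha> - \<beta> * (\<Sum>k\<in>K. (u k)\<^sup>2)))))"
  using assms
proof (induction K arbitrary: \<beta> w rule: finite_induct)
  case empty
  then show ?case by (simp add: space_PiM_empty rank_one_form_def)
next
  case (insert i K)
  define U where "U = (\<Sum>k\<in>K. (u k)\<^sup>2)"
  define D where "D = \<alpha> - \<beta> * (u i)\<^sup>2"
  define X where "X = \<alpha> - \<beta> * ((u i)\<^sup>2 + U)"
  define c where "c = \<beta> * u i * w i / D"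
  define w' where "w' = (\<lambda>k. w k + c * u k)"
  have X: "X > 0" using insert.prems(3) insert.hyps by (simp add: X_def U_def)
  then have D: "D > 0"
    using diff_mult_pos_of_le[of "(u i)\<^sup>2" "(u i)\<^sup>2 + U" \<alpha> \<beta>] insert.prems(2)
    by (simp add: D_def X_def U_def sum_nonneg mult.commute)
  have schur: "\<alpha> - \<alpha> * \<beta> / D * U = \<alpha> * X / D"
    using D by (simp add: D_def X_def field_simps)
  have IH: "(\<integral>\<^sup>+x. ennreal (exp (- rank_one_form \<alpha> (\<alpha> * \<beta> / D) u w' K (\<lambda>k. x (h k)))) \<partial>PiM (h ` K) (\<lambda>_. lborel))
    = ennreal (sqrt (pi / \<alpha>) ^ card K * sqrt (\<alpha> / (\<alpha> - \<alpha> * \<beta> / D * U))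
       * exp ((\<Sum>k\<in>K. (w' k)\<^sup>2) / \<alpha> + \<alpha> * \<beta> / D * (\<Sum>k\<in>K. u k * w' k)\<^sup>2 / (\<alpha> * (\<alpha> - \<alpha> * \<beta> / D * U))))"
    unfolding U_def
    by (rule insert.IH) (use insert.prems D X schur in \<open>auto simp: U_def inj_on_insert\<close>)
  have "(\<Sum>k\<in>K. (w' k)\<^sup>2) = (\<Sum>k\<in>K. (w k)\<^sup>2) + 2 * c * (\<Sum>k\<in>K. u k * w k) + c\<^sup>2 * U"
    and "(\<Sum>k\<in>K. u k * w' k) = (\<Sum>k\<in>K. u k * w k) + c * U"
    by (simp_all add: U_def w'_def power2_eq_square algebra_simps sum.distrib sum_distrib_left)
  then have "(\<integral>\<^sup>+x. ennreal (exp (- rank_one_form \<alpha> \<beta> u w (insert i K) (\<lambda>k. x (h k)))) \<partial>PiM (h ` insert i K) (\<lambda>_. lborel))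
      = ennreal (sqrt (pi / \<alpha>) ^ Suc (card K) * sqrt (\<alpha> / X)
          * exp (((w i)\<^sup>2 + (\<Sum>k\<in>K. (w k)\<^sup>2)) / \<alpha> + \<beta> * (u i * w i + (\<Sum>k\<in>K. u k * w k))\<^sup>2 / (\<alpha> * X)))"
    unfolding nn_integral_exp_neg_rank_one_form_step[of K i h D \<alpha> \<beta> u, OF insert.hyps insert.prems(1) D_def D]
      w'_def[unfolded c_def, symmetric] IH
      rank_one_gauss_value_insert[OF insert.prems(2) D_def D X_def X c_def, symmetric]
    using D X schur insert.prems(2) by (simp add: ennreal_mult)
  then show ?case by (simp add: X_def U_def insert.hyps)
qed

lemma sqrt_divide_power_mult_sqrt:
  fixes c \<alpha> \<gamma> :: real
  assumes "n > 0" "\<alpha> \<noteq> 0"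
  shows "sqrt (c / \<alpha>) ^ n * sqrt (\<alpha> / \<gamma>) = sqrt (c ^ n / (\<alpha> ^ (n - 1) * \<gamma>))"
proof -
  obtain m where n: "n = Suc m" using assms(1) by (cases n) auto
  have "(c / \<alpha>) ^ n * (\<alpha> / \<gamma>) = c ^ n / (\<alpha> ^ (n - 1) * \<gamma>)"
    using assms(2) unfolding n by (simp add: power_divide field_simps)
  then show ?thesis
    by (simp add: real_sqrt_power[symmetric] real_sqrt_mult[symmetric])
qed

lemma nn_integral_exp_neg_rank_one_form_centered:
  fixes K :: "'k set" and h :: "'k \<Rightarrow> 'c" and u :: "'k \<Rightarrow> real"
  assumes "finite K" "K \<noteq> {}" "inj_on h K" "\<alpha> > 0" "\<alpha> - \<beta> * (\<Sum>k\<in>K. (u k)\<^sup>2) > 0"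
  shows "(\<integral>\<^sup>+x. ennreal (exp (- rank_one_form \<alpha> \<beta> u (\<lambda>_. 0) K (\<lambda>k. x (h k)))) \<partial>PiM (h ` K) (\<lambda>_. lborel))
       = ennreal (sqrt (pi ^ card K / (\<alpha> ^ (card K - 1) * (\<alpha> - \<beta> * (\<Sum>k\<in>K. (u k)\<^sup>2)))))"
  using nn_integral_exp_neg_rank_one_form[OF assms(1,3,4,5), of "\<lambda>_. 0"] assms(1,2,4)
  by (simp add: sqrt_divide_power_mult_sqrt card_gt_0_iff)

section \<open>Gaussian integrals of grid forms\<close>

definition grid_form ::
    "real \<Rightarrow> real \<Rightarrow> real \<Rightarrow> real \<Rightarrow> 'r set \<Rightarrow> 'k set \<Rightarrow> ('r \<times> 'k \<Rightarrow> real) \<Rightarrow> real" where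
  "grid_form a b \<beta> \<gamma> R K y =
     a * (\<Sum>i\<in>R. \<Sum>k\<in>K. (y (i, k))\<^sup>2) - b * (\<Sum>i\<in>R. (\<Sum>k\<in>K. y (i, k))\<^sup>2)
     - \<beta> * (\<Sum>k\<in>K. (\<Sum>i\<in>R. y (i, k))\<^sup>2) - \<gamma> * (\<Sum>i\<in>R. \<Sum>k\<in>K. y (i, k))\<^sup>2"

text \<open>The determinant of \<open>grid_form a b \<beta> \<gamma>\<close> on an \<open>r \<times> n\<close> grid, with \<open>\<mu> = \<beta> + n \<gamma>\<close>: its
  eigenvalues are \<open>a\<close>, \<open>a - n b\<close>, \<open>a - r \<beta>\<close> and \<open>a - n b - r \<mu>\<close>, with multiplicities
  \<open>(r - 1) (n - 1)\<close>, \<open>r - 1\<close>, \<open>n - 1\<close> and \<open>1\<close>.\<close>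
definition grid_det :: "real \<Rightarrow> real \<Rightarrow> nat \<Rightarrow> nat \<Rightarrow> real \<Rightarrow> real \<Rightarrow> real" where
  "grid_det a b n r \<beta> \<mu> = a ^ (r * (n - 1)) * (a - n * b) ^ r
     * ((a - r * \<beta>) / a) ^ (n - 1) * ((a - n * b - r * \<mu>) / (a - n * b))"

lemma grid_det_Suc:
  fixes a b \<beta> \<mu> :: real
  assumes "a \<noteq> 0" "a - n * b \<noteq> 0" "a - \<beta> \<noteq> 0" "a - n * b - \<mu> \<noteq> 0"
  shows "(a - \<beta>) ^ (n - 1) * (a - n * b - \<mu>)
         * grid_det a b n r (a * \<beta> / (a - \<beta>)) ((a - n * b) * \<mu> / (a - n * b - \<mu>))
       = grid_det a b n (Suc r) \<beta> \<mu>"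
proof -
  define t where "t = a - n * b"
  define A where "A = a - Suc r * \<beta>"
  define T where "T = t - Suc r * \<mu>"
  define p where "p = n - 1"
  have t: "t \<noteq> 0" "t - \<mu> \<noteq> 0" using assms by (simp_all add: t_def)
  have row: "(a - r * (a * \<beta> / (a - \<beta>))) / a = A / (a - \<beta>)"
    using assms by (simp add: A_def field_simps)
  have total: "(t - r * (t * \<mu> / (t - \<mu>))) / t = T / (t - \<mu>)"
    using t by (simp add: T_def field_simps)
  have "(a - \<beta>) ^ p * (t - \<mu>) * (a ^ (r * p) * t ^ r * (A / (a - \<beta>)) ^ p * (T / (t - \<mu>)))
      = a ^ (r * p) * t ^ r * A ^ p * T"
    using assms(3) t by (simp add: power_divide)
  also have "\<dots> = a ^ (Suc r * p) * t ^ Suc r * (A / a) ^ p * (T / t)"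
    using assms(1) t by (simp add: power_divide power_add)
  finally show ?thesis
    unfolding grid_det_def t_def[symmetric] p_def[symmetric] row total
    by (simp only: A_def T_def)
qed

lemma grid_form_insert:
  assumes "finite R" "i \<notin> R"
  shows "grid_form a b \<beta> \<gamma> (insert i R) K y
       = rank_one_form (a - \<beta>) (b + \<gamma>) (\<lambda>_. 1)
           (\<lambda>k. \<beta> * (\<Sum>j\<in>R. y (j, k)) + \<gamma> * (\<Sum>j\<in>R. \<Sum>k'\<in>K. y (j, k'))) K (\<lambda>k. y (i, k))
         + grid_form a b \<beta> \<gamma> R K y"
proof -
  define col where "col k = (\<Sum>j\<in>R. y (j, k))" for k
  define C where "C = (\<Sum>j\<in>R. \<Sum>k\<in>K. y (j, k))"
  have cols: "(\<Sum>k\<in>K. (\<Sum>j\<in>insert i R. y (j, k))\<^sup>2)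
      = (\<Sum>k\<in>K. (y (i, k))\<^sup>2) + 2 * (\<Sum>k\<in>K. col k * y (i, k)) + (\<Sum>k\<in>K. (col k)\<^sup>2)"
    using assms by (simp add: col_def power2_sum sum.distrib sum_distrib_left mult_ac)
  have rows: "(\<Sum>j\<in>insert i R. \<Sum>k\<in>K. (y (j, k))\<^sup>2) = (\<Sum>k\<in>K. (y (i, k))\<^sup>2) + (\<Sum>j\<in>R. \<Sum>k\<in>K. (y (j, k))\<^sup>2)"
    "(\<Sum>j\<in>insert i R. (\<Sum>k\<in>K. y (j, k))\<^sup>2) = (\<Sum>k\<in>K. y (i, k))\<^sup>2 + (\<Sum>j\<in>R. (\<Sum>k\<in>K. y (j, k))\<^sup>2)"
    "(\<Sum>j\<in>insert i R. \<Sum>k\<in>K. y (j, k)) = (\<Sum>k\<in>K. y (i, k)) + C"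
    using assms by (simp_all add: C_def)
  have lin: "(\<Sum>k\<in>K. (\<beta> * col k + \<gamma> * C) * y (i, k)) = \<beta> * (\<Sum>k\<in>K. col k * y (i, k)) + \<gamma> * C * (\<Sum>k\<in>K. y (i, k))"
    by (simp add: algebra_simps sum.distrib sum_distrib_left)
  show ?thesis
    unfolding grid_form_def rank_one_form_def rows cols
    unfolding col_def[symmetric] C_def[symmetric] lin
    by (simp add: power2_sum algebra_simps)
qed

text \<open>Integrating out one row replaces \<open>\<beta>\<close> by \<open>a \<beta> / (a - \<beta>)\<close> and \<open>\<mu> = \<beta> + n \<gamma>\<close>
  by \<open>t \<mu> / (t - \<mu>)\<close> with \<open>t = a - n b\<close>; this is the resulting update of \<open>\<gamma>\<close>.\<close>
lemma grid_coefficient_update: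
  fixes a b \<beta> \<gamma> :: real and n :: nat
  assumes n: "n > 0" and nz: "a - \<beta> \<noteq> 0" "a - n * b - (\<beta> + n * \<gamma>) \<noteq> 0"
  shows "\<gamma> + (2 * \<beta> * \<gamma> + n * \<gamma>\<^sup>2) / (a - \<beta>) + (b + \<gamma>) * (\<beta> + n * \<gamma>)\<^sup>2 / ((a - \<beta>) * (a - n * b - (\<beta> + n * \<gamma>)))
       = ((a - n * b) * (\<beta> + n * \<gamma>) / (a - n * b - (\<beta> + n * \<gamma>)) - a * \<beta> / (a - \<beta>)) / n"
proof -
  define \<mu> where "\<mu> = \<beta> + n * \<gamma>"
  define t where "t = a - n * b"
  have \<gamma>: "\<gamma> = (\<mu> - \<beta>) / n" and b: "b + \<gamma> = ((a - \<beta>) - (t - \<mu>)) / n"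
    using n by (simp_all add: \<mu>_def t_def field_simps)
  have sq: "2 * \<beta> * \<gamma> + n * \<gamma>\<^sup>2 = (\<mu>\<^sup>2 - \<beta>\<^sup>2) / n"
    using n by (simp add: \<mu>_def field_simps power2_eq_square)
  define \<alpha> where "\<alpha> = a - \<beta>"
  define s where "s = t - \<mu>"
  have a: "a = \<alpha> + \<beta>" and t: "t = s + \<mu>" by (simp_all add: \<alpha>_def s_def)
  have "\<alpha> \<noteq> 0" "s \<noteq> 0" using nz by (simp_all add: \<alpha>_def s_def t_def \<mu>_def)
  then show ?thesis
    unfolding \<mu>_def[symmetric] t_def[symmetric] sq b unfolding \<gamma> \<alpha>_def[symmetric] s_def[symmetric] a t
    using n by (simp add: field_simps power2_eq_square)
qed

lemma grid_form_complete_square: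
  fixes a b \<beta> \<gamma> :: real
  assumes K: "finite K" "card K = n" "n > 0" and nz: "a - \<beta> \<noteq> 0" "a - n * b - (\<beta> + n * \<gamma>) \<noteq> 0"
  shows "(\<Sum>k\<in>K. (\<beta> * (\<Sum>j\<in>R. y (j, k)) + \<gamma> * (\<Sum>j\<in>R. \<Sum>k'\<in>K. y (j, k')))\<^sup>2) / (a - \<beta>)
       + (b + \<gamma>) * (\<Sum>k\<in>K. \<beta> * (\<Sum>j\<in>R. y (j, k)) + \<gamma> * (\<Sum>j\<in>R. \<Sum>k'\<in>K. y (j, k')))\<^sup>2
           / ((a - \<beta>) * (a - n * b - (\<beta> + n * \<gamma>)))
       - grid_form a b \<beta> \<gamma> R K y
     = - grid_form a b (a * \<beta> / (a - \<beta>))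
           (((a - n * b) * (\<beta> + n * \<gamma>) / (a - n * b - (\<beta> + n * \<gamma>)) - a * \<beta> / (a - \<beta>)) / n) R K y"
proof -
  define col where "col k = (\<Sum>j\<in>R. y (j, k))" for k
  define C where "C = (\<Sum>j\<in>R. \<Sum>k\<in>K. y (j, k))"
  define S where "S = (\<Sum>k\<in>K. (col k)\<^sup>2)"
  have C: "C = (\<Sum>k\<in>K. col k)" unfolding C_def col_def by (rule sum.swap)
  have w2: "(\<Sum>k\<in>K. (\<beta> * col k + \<gamma> * C)\<^sup>2) = \<beta>\<^sup>2 * S + (2 * \<beta> * \<gamma> + n * \<gamma>\<^sup>2) * C\<^sup>2"
  proof -
    have "(\<Sum>k\<in>K. (\<beta> * col k + \<gamma> * C)\<^sup>2) = (\<Sum>k\<in>K. \<beta>\<^sup>2 * (col k)\<^sup>2 + (2 * \<beta> * \<gamma> * C) * col k + \<gamma>\<^sup>2 * C\<^sup>2)"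
      by (intro sum.cong) (simp_all add: power2_eq_square algebra_simps)
    also have "\<dots> = \<beta>\<^sup>2 * S + (2 * \<beta> * \<gamma> * C) * (\<Sum>k\<in>K. col k) + n * (\<gamma>\<^sup>2 * C\<^sup>2)"
      using K by (simp add: S_def sum.distrib sum_distrib_left)
    finally show ?thesis unfolding C[symmetric] by (simp add: power2_eq_square algebra_simps)
  qed
  have w1: "(\<Sum>k\<in>K. \<beta> * col k + \<gamma> * C) = (\<beta> + n * \<gamma>) * C"
    using K by (simp add: sum.distrib sum_distrib_left[symmetric] C[symmetric] algebra_simps)
  define \<alpha> where "\<alpha> = a - \<beta>"
  define Z where "Z = a - n * b - (\<beta> + n * \<gamma>)"
  have "\<alpha> \<noteq> 0" "Z \<noteq> 0" using nz by (simp_all add: \<alpha>_def Z_def)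
  then have exponent: "(\<beta>\<^sup>2 * S + (2 * \<beta> * \<gamma> + n * \<gamma>\<^sup>2) * C\<^sup>2) / \<alpha> + (b + \<gamma>) * ((\<beta> + n * \<gamma>) * C)\<^sup>2 / (\<alpha> * Z)
      = \<beta>\<^sup>2 / \<alpha> * S + ((2 * \<beta> * \<gamma> + n * \<gamma>\<^sup>2) / \<alpha> + (b + \<gamma>) * (\<beta> + n * \<gamma>)\<^sup>2 / (\<alpha> * Z)) * C\<^sup>2"
    by (simp add: field_simps power2_eq_square)
  have row: "a * \<beta> / \<alpha> = \<beta> + \<beta>\<^sup>2 / \<alpha>"
    using \<open>\<alpha> \<noteq> 0\<close> by (simp add: \<alpha>_def field_simps power2_eq_square)
  show ?thesis
    unfolding grid_coefficient_update[OF K(3) nz, symmetric]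
    unfolding grid_form_def col_def[symmetric] C_def[symmetric] S_def[symmetric] w1 w2
      \<alpha>_def[symmetric] Z_def[symmetric] exponent row
    by (simp add: algebra_simps)
qed

lemma borel_measurable_grid_form [measurable]:
  "(\<lambda>x. grid_form a b \<beta> \<gamma> R K (\<lambda>p. x (e p))) \<in> borel_measurable (PiM (e ` (R \<times> K)) (\<lambda>_. lborel))"
  unfolding grid_form_def by measurable

lemma grid_form_cong:
  "(\<And>j k. j \<in> R \<Longrightarrow> k \<in> K \<Longrightarrow> y (j, k) = z (j, k)) \<Longrightarrow> grid_form a b \<beta> \<gamma> R K y = grid_form a b \<beta> \<gamma> R K z"
  by (simp add: grid_form_def cong: sum.cong)

lemma nn_integral_exp_neg_grid_form_row:
  fixes a b \<beta> \<gamma> :: real and h :: "'k \<Rightarrow> 'c"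
  assumes R: "finite R" "i \<notin> R" and K: "finite K" "card K = n" "n > 0" "inj_on h K"
    and pos: "a - \<beta> > 0" "a - n * b - (\<beta> + n * \<gamma>) > 0"
  shows "(\<integral>\<^sup>+z. ennreal (exp (- grid_form a b \<beta> \<gamma> (insert i R) K
              (\<lambda>p. if fst p = i then z (h (snd p)) else y p))) \<partial>PiM (h ` K) (\<lambda>_. lborel))
       = ennreal (sqrt (pi / (a - \<beta>)) ^ n * sqrt ((a - \<beta>) / (a - n * b - (\<beta> + n * \<gamma>)))
           * exp (- grid_form a b (a * \<beta> / (a - \<beta>))
                      (((a - n * b) * (\<beta> + n * \<gamma>) / (a - n * b - (\<beta> + n * \<gamma>)) - a * \<beta> / (a - \<beta>)) / n) R K y))"
proof -
  define w where "w = (\<lambda>k. \<beta> * (\<Sum>j\<in>R. y (j, k)) + \<gamma> * (\<Sum>j\<in>R. \<Sum>k'\<in>K. y (j, k')))"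
  define Z where "Z = a - n * b - (\<beta> + n * \<gamma>)"
  have Z: "(a - \<beta>) - (b + \<gamma>) * (\<Sum>k\<in>K. 1\<^sup>2) = Z"
    using K by (simp add: Z_def algebra_simps)
  have split: "grid_form a b \<beta> \<gamma> (insert i R) K (\<lambda>p. if fst p = i then z (h (snd p)) else y p)
      = rank_one_form (a - \<beta>) (b + \<gamma>) (\<lambda>_. 1) w K (\<lambda>k. z (h k)) + grid_form a b \<beta> \<gamma> R K y" for z
  proof -
    have "j \<in> R \<Longrightarrow> (j = i) = False" for j using R(2) by auto
    moreover have "grid_form a b \<beta> \<gamma> R K (\<lambda>p. if fst p = i then z (h (snd p)) else y p) = grid_form a b \<beta> \<gamma> R K y"
      using R(2) by (intro grid_form_cong) auto
    ultimately show ?thesis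
      using R by (simp add: grid_form_insert w_def cong: sum.cong)
  qed
  have "(\<integral>\<^sup>+z. ennreal (exp (- grid_form a b \<beta> \<gamma> (insert i R) K
              (\<lambda>p. if fst p = i then z (h (snd p)) else y p))) \<partial>PiM (h ` K) (\<lambda>_. lborel))
      = (\<integral>\<^sup>+z. ennreal (exp (- rank_one_form (a - \<beta>) (b + \<gamma>) (\<lambda>_. 1) w K (\<lambda>k. z (h k)))) \<partial>PiM (h ` K) (\<lambda>_. lborel))
        * ennreal (exp (- grid_form a b \<beta> \<gamma> R K y))"
    unfolding split minus_add_distrib exp_add by (simp add: ennreal_mult' nn_integral_multc)
  also have "\<dots> = ennreal (sqrt (pi / (a - \<beta>)) ^ n * sqrt ((a - \<beta>) / Z)
      * exp ((\<Sum>k\<in>K. (w k)\<^sup>2) / (a - \<beta>) + (b + \<gamma>) * (\<Sum>k\<in>K. w k)\<^sup>2 / ((a - \<beta>) * Z)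
             - grid_form a b \<beta> \<gamma> R K y))"
    using nn_integral_exp_neg_rank_one_form[OF K(1,4) pos(1), of "b + \<gamma>" "\<lambda>_. 1" w] pos K(2)
    unfolding Z by (simp add: Z_def exp_diff exp_minus ennreal_mult'[symmetric] divide_inverse mult.assoc)
  also have "\<dots> = ennreal (sqrt (pi / (a - \<beta>)) ^ n * sqrt ((a - \<beta>) / Z)
      * exp (- grid_form a b (a * \<beta> / (a - \<beta>)) (((a - n * b) * (\<beta> + n * \<gamma>) / Z - a * \<beta> / (a - \<beta>)) / n) R K y))"
    unfolding w_def Z_def using K(1-3) pos by (subst grid_form_complete_square) auto
  finally show ?thesis unfolding Z_def .
qed

lemma sqrt_grid_det_Suc:
  fixes a b \<beta> \<mu> :: real
  assumes "n > 0" "a \<noteq> 0" "a - n * b \<noteq> 0" "a - \<beta> > 0" "a - n * b - \<mu> > 0"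
  shows "sqrt (pi / (a - \<beta>)) ^ n * sqrt ((a - \<beta>) / (a - n * b - \<mu>))
         * sqrt (pi ^ (n * r) / grid_det a b n r (a * \<beta> / (a - \<beta>)) ((a - n * b) * \<mu> / (a - n * b - \<mu>)))
       = sqrt (pi ^ (n * Suc r) / grid_det a b n (Suc r) \<beta> \<mu>)"
  using assms
  by (simp add: sqrt_divide_power_mult_sqrt real_sqrt_mult[symmetric] grid_det_Suc[symmetric] power_add mult_ac)

lemma nn_integral_grid_form_fold_row:
  fixes e :: "'r \<times> 'k \<Rightarrow> 'c"
  assumes "finite R" "i \<notin> R" "finite K" "inj_on e (insert i R \<times> K)"
  shows "(\<integral>\<^sup>+x. ennreal (exp (- grid_form a b \<beta> \<gamma> (insert i R) K (\<lambda>p. x (e p)))) \<partial>PiM (e ` (insert i R \<times> K)) (\<lambda>_. lborel))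
       = (\<integral>\<^sup>+x. (\<integral>\<^sup>+z. ennreal (exp (- grid_form a b \<beta> \<gamma> (insert i R) K
              (\<lambda>p. if fst p = i then z (e (i, snd p)) else x (e p)))) \<partial>PiM ((\<lambda>k. e (i, k)) ` K) (\<lambda>_. lborel))
           \<partial>PiM (e ` (R \<times> K)) (\<lambda>_. lborel))"
proof -
  interpret product_sigma_finite "\<lambda>_. lborel :: real measure" by standard
  define I where "I = e ` (R \<times> K)"
  define J where "J = (\<lambda>k. e (i, k)) ` K"
  have IJ: "I \<inter> J = {}" "e ` (insert i R \<times> K) = I \<union> J"
    using assms(2) inj_onD[OF assms(4)] by (fastforce simp: I_def J_def)+
  have merge: "grid_form a b \<beta> \<gamma> (insert i R) K (\<lambda>p. merge I J (x, z) (e p))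
      = grid_form a b \<beta> \<gamma> (insert i R) K (\<lambda>p. if fst p = i then z (e (i, snd p)) else x (e p))" for x z
    using IJ(1) assms(2) by (intro grid_form_cong) (auto simp: merge_def I_def J_def)
  have meas: "(\<lambda>x. ennreal (exp (- grid_form a b \<beta> \<gamma> (insert i R) K (\<lambda>p. x (e p)))))
      \<in> borel_measurable (PiM (I \<union> J) (\<lambda>_. lborel))"
    unfolding IJ(2)[symmetric] by measurable
  have fin: "finite I" "finite J"
    using assms(1,3) by (simp_all add: I_def J_def)
  have "(\<integral>\<^sup>+x. ennreal (exp (- grid_form a b \<beta> \<gamma> (insert i R) K (\<lambda>p. x (e p)))) \<partial>PiM (I \<union> J) (\<lambda>_. lborel))
      = (\<integral>\<^sup>+x. (\<integral>\<^sup>+z. ennreal (exp (- grid_form a b \<beta> \<gamma> (insert i R) K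
              (\<lambda>p. if fst p = i then z (e (i, snd p)) else x (e p)))) \<partial>PiM J (\<lambda>_. lborel)) \<partial>PiM I (\<lambda>_. lborel))"
    unfolding product_nn_integral_fold[OF IJ(1) fin meas] merge ..
  then show ?thesis
    unfolding IJ(2) I_def J_def .
qed

lemma nn_integral_exp_neg_grid_form:
  fixes R :: "'r set" and K :: "'k set" and e :: "'r \<times> 'k \<Rightarrow> 'c" and a b \<beta> \<gamma> :: real
  assumes "finite R" "finite K" "K \<noteq> {}" "inj_on e (R \<times> K)" "a > 0" "a - card K * b > 0"
    "a - card R * \<beta> > 0" "a - card K * b - card R * (\<beta> + card K * \<gamma>) > 0"
  shows "(\<integral>\<^sup>+x. ennreal (exp (- grid_form a b \<beta> \<gamma> R K (\<lambda>p. x (e p)))) \<partial>PiM (e ` (R \<times> K)) (\<lambda>_. lborel))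
       = ennreal (sqrt (pi ^ (card K * card R) / grid_det a b (card K) (card R) \<beta> (\<beta> + card K * \<gamma>)))"
  using assms
proof (induction R arbitrary: \<beta> \<gamma> rule: finite_induct)
  case empty
  then show ?case by (simp add: space_PiM_empty grid_form_def grid_det_def)
next
  case (insert i R)
  define n where "n = card K"
  define r where "r = card R"
  define t where "t = a - n * b"
  define \<mu> where "\<mu> = \<beta> + n * \<gamma>"
  define \<beta>' where "\<beta>' = a * \<beta> / (a - \<beta>)"
  define \<gamma>' where "\<gamma>' = (t * \<mu> / (t - \<mu>) - a * \<beta> / (a - \<beta>)) / n"
  have n: "n > 0" using insert.prems(2) insert.prems(1) by (simp add: n_def card_gt_0_iff)
  have a: "a > 0" "t > 0" "a - Suc r * \<beta> > 0" "t - Suc r * \<mu> > 0"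
    using insert.prems insert.hyps by (simp_all add: n_def r_def t_def \<mu>_def)
  have row: "a - \<beta> > 0" "t - \<mu> > 0"
    using diff_mult_pos_of_le[of 1 "Suc r"] a by auto
  have \<mu>': "\<beta>' + n * \<gamma>' = t * \<mu> / (t - \<mu>)" using n by (simp add: \<beta>'_def \<gamma>'_def)
  have IH: "(\<integral>\<^sup>+x. ennreal (exp (- grid_form a b \<beta>' \<gamma>' R K (\<lambda>p. x (e p)))) \<partial>PiM (e ` (R \<times> K)) (\<lambda>_. lborel))
      = ennreal (sqrt (pi ^ (n * r) / grid_det a b n r \<beta>' (t * \<mu> / (t - \<mu>))))"
  proof -
    have "a - r * \<beta>' = a * (a - Suc r * \<beta>) / (a - \<beta>)" "t - r * (t * \<mu> / (t - \<mu>)) = t * (t - Suc r * \<mu>) / (t - \<mu>)"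
      using row by (simp_all add: \<beta>'_def field_simps)
    then have "a - r * \<beta>' > 0" "t - r * (\<beta>' + n * \<gamma>') > 0"
      using a row unfolding \<mu>' by simp_all
    then show ?thesis
      unfolding \<mu>'[symmetric] unfolding n_def r_def
      by (intro insert.IH)
        (use insert.prems inj_on_subset[OF insert.prems(3), of "R \<times> K"] in \<open>auto simp: n_def r_def t_def\<close>)
  qed
  have "inj_on (\<lambda>k. e (i, k)) K" using insert.prems(3) by (auto simp: inj_on_def)
  then have "(\<integral>\<^sup>+x. ennreal (exp (- grid_form a b \<beta> \<gamma> (insert i R) K (\<lambda>p. x (e p)))) \<partial>PiM (e ` (insert i R \<times> K)) (\<lambda>_. lborel))
      = ennreal (sqrt (pi / (a - \<beta>)) ^ n * sqrt ((a - \<beta>) / (t - \<mu>)))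
        * (\<integral>\<^sup>+x. ennreal (exp (- grid_form a b \<beta>' \<gamma>' R K (\<lambda>p. x (e p)))) \<partial>PiM (e ` (R \<times> K)) (\<lambda>_. lborel))"
    unfolding nn_integral_grid_form_fold_row[OF insert.hyps insert.prems(1,3)]
    using nn_integral_exp_neg_grid_form_row[OF insert.hyps insert.prems(1) n_def[symmetric] n, of "\<lambda>k. e (i, k)" a \<beta> b \<gamma>] row
    by (simp add: t_def \<mu>_def \<beta>'_def \<gamma>'_def ennreal_mult' nn_integral_cmult)
  also have "\<dots> = ennreal (sqrt (pi / (a - \<beta>)) ^ n * sqrt ((a - \<beta>) / (t - \<mu>))
      * sqrt (pi ^ (n * r) / grid_det a b n r \<beta>' (t * \<mu> / (t - \<mu>))))"
    unfolding IH using row by (simp add: ennreal_mult')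
  also have "\<dots> = ennreal (sqrt (pi ^ (n * Suc r) / grid_det a b n (Suc r) \<beta> \<mu>))"
    using sqrt_grid_det_Suc[of n a b \<beta> \<mu> r] n a row by (simp add: t_def \<beta>'_def)
  finally show ?case
    using insert.hyps by (simp add: n_def r_def \<mu>_def)
qed

section \<open>The exponent in real coordinates\<close>

lemma herm_of_cnj: "herm_of x q p = cnj (herm_of x p q)"
  by (cases p; cases q) (auto simp: herm_of_def lex_less_def complex_eq_iff)

definition hs_norm_sq :: "nat \<Rightarrow> (idx \<Rightarrow> idx \<Rightarrow> complex) \<Rightarrow> real" where
  "hs_norm_sq N \<Phi> = (\<Sum>i<N. \<Sum>k<N. \<Sum>j<N. \<Sum>l<N. (cmod (\<Phi> (i, k) (j, l)))\<^sup>2)"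

definition ptrace2_norm_sq :: "nat \<Rightarrow> (idx \<Rightarrow> idx \<Rightarrow> complex) \<Rightarrow> real" where
  "ptrace2_norm_sq N \<Phi> = (\<Sum>i<N. \<Sum>j<N. (cmod (\<Sum>k<N. \<Phi> (i, k) (j, k)))\<^sup>2)"

definition ptrace1_norm_sq :: "nat \<Rightarrow> (idx \<Rightarrow> idx \<Rightarrow> complex) \<Rightarrow> real" where
  "ptrace1_norm_sq N \<Phi> = (\<Sum>k<N. \<Sum>l<N. (cmod (\<Sum>i<N. \<Phi> (i, k) (i, l)))\<^sup>2)"

lemma sum_idxs: "(\<Sum>p\<in>idxs N. g p) = (\<Sum>i<N. \<Sum>k<N. g (i, k))"
  by (simp add: idxs_def sum.cartesian_product atLeast0LessThan)

lemma tr_sq_hermitian: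
  assumes "\<And>p q. \<Phi> q p = cnj (\<Phi> p q)"
  shows "tr_sq N \<Phi> = of_real (hs_norm_sq N \<Phi>)"
proof -
  have "\<Phi> p q * \<Phi> q p = of_real ((cmod (\<Phi> p q))\<^sup>2)" for p q
    by (metis assms complex_norm_square)
  then show ?thesis
    by (simp only: tr_sq_def hs_norm_sq_def sum_idxs of_real_sum)
qed

lemma sq_norm_cnj_mult: "cnj z * z = of_real ((cmod z)\<^sup>2)"
  by (metis complex_norm_square mult.commute)

lemma V4_ptrace2_hermitian:
  assumes herm: "\<And>p q. \<Phi> q p = cnj (\<Phi> p q)"
  shows "(\<Sum>a2<N. \<Sum>a3<N. \<Sum>b2<N. \<Sum>b3<N. \<Phi> (b2, a3) (a2, a3) * \<Phi> (a2, b3) (b2, b3))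
       = of_real (ptrace2_norm_sq N \<Phi>)"
proof -
  have "(\<Sum>a2<N. \<Sum>a3<N. \<Sum>b2<N. \<Sum>b3<N. \<Phi> (b2, a3) (a2, a3) * \<Phi> (a2, b3) (b2, b3))
      = (\<Sum>a2<N. \<Sum>b2<N. \<Sum>a3<N. \<Sum>b3<N. \<Phi> (b2, a3) (a2, a3) * \<Phi> (a2, b3) (b2, b3))"
    by (rule sum.cong[OF refl], rule sum.swap)
  also have "\<dots> = (\<Sum>a2<N. \<Sum>b2<N. (\<Sum>a3<N. \<Phi> (b2, a3) (a2, a3)) * (\<Sum>b3<N. \<Phi> (a2, b3) (b2, b3)))"
    by (simp add: sum_product)
  also have "\<dots> = (\<Sum>a2<N. \<Sum>b2<N. cnj (\<Sum>k<N. \<Phi> (a2, k) (b2, k)) * (\<Sum>k<N. \<Phi> (a2, k) (b2, k)))"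
    by (subst herm) simp
  finally show ?thesis by (simp only: sq_norm_cnj_mult ptrace2_norm_sq_def of_real_sum)
qed

lemma V4_ptrace1_hermitian:
  assumes herm: "\<And>p q. \<Phi> q p = cnj (\<Phi> p q)"
  shows "(\<Sum>a2<N. \<Sum>a3<N. \<Sum>b2<N. \<Sum>b3<N. \<Phi> (a2, b3) (a2, a3) * \<Phi> (b2, a3) (b2, b3))
       = of_real (ptrace1_norm_sq N \<Phi>)"
proof -
  have "(\<Sum>a2<N. \<Sum>a3<N. \<Sum>b2<N. \<Sum>b3<N. \<Phi> (a2, b3) (a2, a3) * \<Phi> (b2, a3) (b2, b3))
      = (\<Sum>a3<N. \<Sum>a2<N. \<Sum>b2<N. \<Sum>b3<N. \<Phi> (a2, b3) (a2, a3) * \<Phi> (b2, a3) (b2, b3))"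
    by (rule sum.swap)
  also have "\<dots> = (\<Sum>a3<N. \<Sum>a2<N. \<Sum>b3<N. \<Sum>b2<N. \<Phi> (a2, b3) (a2, a3) * \<Phi> (b2, a3) (b2, b3))"
    by (rule sum.cong[OF refl], rule sum.cong[OF refl], rule sum.swap)
  also have "\<dots> = (\<Sum>a3<N. \<Sum>b3<N. \<Sum>a2<N. \<Sum>b2<N. \<Phi> (a2, b3) (a2, a3) * \<Phi> (b2, a3) (b2, b3))"
    by (rule sum.cong[OF refl], rule sum.swap)
  also have "\<dots> = (\<Sum>a3<N. \<Sum>b3<N. (\<Sum>a2<N. \<Phi> (a2, b3) (a2, a3)) * (\<Sum>b2<N. \<Phi> (b2, a3) (b2, b3)))"
    by (simp add: sum_product)
  also have "\<dots> = (\<Sum>a3<N. \<Sum>b3<N. cnj (\<Sum>i<N. \<Phi> (i, a3) (i, b3)) * (\<Sum>i<N. \<Phi> (i, a3) (i, b3)))"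
    by (subst herm) simp
  finally show ?thesis by (simp only: sq_norm_cnj_mult ptrace1_norm_sq_def of_real_sum)
qed

lemma V4_hermitian:
  assumes herm: "\<And>p q. \<Phi> q p = cnj (\<Phi> p q)"
  shows "V4 N lam \<Phi> = of_real (real N * lam / 2 * (hs_norm_sq N \<Phi> + ptrace2_norm_sq N \<Phi> + ptrace1_norm_sq N \<Phi>))"
proof -
  have hs: "(\<Sum>a2<N. \<Sum>a3<N. \<Sum>b2<N. \<Sum>b3<N. \<Phi> (b2, b3) (a2, a3) * \<Phi> (a2, a3) (b2, b3))
      = of_real (hs_norm_sq N \<Phi>)"
    unfolding tr_sq_hermitian[OF herm, symmetric] by (simp add: tr_sq_def sum_idxs mult.commute)
  show ?thesis
    using V4_ptrace2_hermitian[of \<Phi>, OF herm] V4_ptrace1_hermitian[of \<Phi>, OF herm]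
    by (simp add: V4_def sum.distrib hs)
qed

definition lt_pairs :: "nat \<Rightarrow> (nat \<times> nat) set" where
  "lt_pairs N = {(i, j). i < j \<and> j < N}"

lemma finite_lt_pairs [simp]: "finite (lt_pairs N)"
  by (rule finite_subset[of _ "{..<N} \<times> {..<N}"]) (auto simp: lt_pairs_def)

lemma sum_lt_pairs: "(\<Sum>(i, j)\<in>lt_pairs N. g i j) = (\<Sum>j<N. \<Sum>i<j. g i j)"
proof -
  have pairs: "lt_pairs N = (\<lambda>(j, i). (i, j)) ` (SIGMA j:{..<N}. {..<j})"
    by (auto simp: lt_pairs_def image_iff)
  have "inj_on (\<lambda>(j, i). (i, j)) (SIGMA j:{..<N}. {..<j})"
    by (auto simp: inj_on_def)
  then have "(\<Sum>(i, j)\<in>lt_pairs N. g i j) = (\<Sum>(j, i)\<in>(SIGMA j:{..<N}. {..<j}). g i j)"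
    unfolding pairs by (subst sum.reindex) (auto simp: case_prod_beta)
  then show ?thesis by (simp add: sum.Sigma)
qed

lemma card_lt_pairs: "2 * card (lt_pairs N) = N * (N - 1)"
proof -
  have "card (lt_pairs N) = (\<Sum>j<N. j)"
    using sum_lt_pairs[of "\<lambda>_ _. 1::nat" N] by simp
  moreover have "2 * (\<Sum>j<N. j) = N * (N - 1)"
    by (induction N) (auto simp: algebra_simps)
  ultimately show ?thesis by simp
qed

lemma sum_square_symmetric:
  fixes g :: "nat \<Rightarrow> nat \<Rightarrow> 'a::comm_semiring_1"
  assumes "\<And>i j. g i j = g j i"
  shows "(\<Sum>i<N. \<Sum>j<N. g i j) = (\<Sum>i<N. g i i) + 2 * (\<Sum>(i, j)\<in>lt_pairs N. g i j)"
proof (induction N)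
  case (Suc N)
  have "(\<Sum>i<Suc N. \<Sum>j<Suc N. g i j) = (\<Sum>i<N. \<Sum>j<N. g i j) + (\<Sum>i<N. g i N) + (\<Sum>j<N. g N j) + g N N"
    by (simp add: sum.distrib add_ac)
  also have "(\<Sum>j<N. g N j) = (\<Sum>i<N. g i N)" using assms by simp
  finally show ?case using Suc by (simp add: sum_lt_pairs algebra_simps mult_2)
qed (simp add: lt_pairs_def)

lemma sum_lt_pairs_UNIV_bool:
  "(\<Sum>(p, f)\<in>lt_pairs N \<times> UNIV. g p f) = (\<Sum>p\<in>lt_pairs N. g p False + g p True)"
  by (simp add: sum.cartesian_product[symmetric] UNIV_bool)

lemma norm_herm_of_diag_sum: "(cmod (\<Sum>k\<in>A. herm_of x (p k) (p k)))\<^sup>2 = (\<Sum>k\<in>A. x (p k, p k, False))\<^sup>2"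
  by (simp add: herm_of_def cmod_power2 Re_sum Im_sum)

lemma norm_herm_of_lex_sum:
  assumes "\<And>k. k \<in> A \<Longrightarrow> lex_less (p k) (q k)"
  shows "(cmod (\<Sum>k\<in>A. herm_of x (p k) (q k)))\<^sup>2 = (\<Sum>f\<in>UNIV. (\<Sum>k\<in>A. x (p k, q k, f))\<^sup>2)"
proof -
  have "herm_of x (p k) (q k) = Complex (x (p k, q k, False)) (x (p k, q k, True))" if "k \<in> A" for k
    using assms[OF that] by (auto simp: herm_of_def lex_less_def)
  then show ?thesis
    by (simp add: cmod_power2 Re_sum Im_sum UNIV_bool cong: sum.cong)
qed

lemma hs_norm_sq_herm_of:
  "hs_norm_sq N (herm_of x) = (\<Sum>i<N. \<Sum>k<N. (x ((i, k), (i, k), False))\<^sup>2)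
     + 2 * (\<Sum>((i, j), f)\<in>lt_pairs N \<times> UNIV. \<Sum>k<N. \<Sum>l<N. (x ((i, k), (j, l), f))\<^sup>2)
     + 2 * (\<Sum>((k, l), f)\<in>lt_pairs N \<times> UNIV. \<Sum>i<N. (x ((i, k), (i, l), f))\<^sup>2)"
proof -
  define n2 where "n2 p q = (cmod (herm_of x p q))\<^sup>2" for p q
  have n2_sym: "n2 p q = n2 q p" for p q
    unfolding n2_def by (subst herm_of_cnj) simp
  have n2_lex: "lex_less p q \<Longrightarrow> n2 p q = (x (p, q, False))\<^sup>2 + (x (p, q, True))\<^sup>2" for p q
    using norm_herm_of_lex_sum[of "{()}" "\<lambda>_. p" "\<lambda>_. q" x] by (simp add: n2_def UNIV_bool)
  define G where "G i j = (\<Sum>k<N. \<Sum>l<N. n2 (i, k) (j, l))" for i j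
  have "hs_norm_sq N (herm_of x) = (\<Sum>i<N. \<Sum>j<N. G i j)"
    unfolding hs_norm_sq_def G_def n2_def by (rule sum.cong[OF refl], rule sum.swap)
  also have "\<dots> = (\<Sum>i<N. G i i) + 2 * (\<Sum>(i, j)\<in>lt_pairs N. G i j)"
  proof (rule sum_square_symmetric)
    show "G i j = G j i" for i j
      unfolding G_def by (subst sum.swap) (simp add: n2_sym)
  qed
  also have "(\<Sum>i<N. G i i) = (\<Sum>i<N. \<Sum>k<N. (x ((i, k), (i, k), False))\<^sup>2)
      + 2 * (\<Sum>(k, l)\<in>lt_pairs N. \<Sum>i<N. n2 (i, k) (i, l))"
  proof -
    have "G i i = (\<Sum>k<N. n2 (i, k) (i, k)) + 2 * (\<Sum>(k, l)\<in>lt_pairs N. n2 (i, k) (i, l))" for i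
      unfolding G_def by (rule sum_square_symmetric) (simp add: n2_sym)
    moreover have "n2 p p = (x (p, p, False))\<^sup>2" for p
      by (simp add: n2_def herm_of_def)
    ultimately have "(\<Sum>i<N. G i i) = (\<Sum>i<N. \<Sum>k<N. (x ((i, k), (i, k), False))\<^sup>2)
        + 2 * (\<Sum>i<N. \<Sum>(k, l)\<in>lt_pairs N. n2 (i, k) (i, l))"
      by (simp add: sum.distrib sum_distrib_left)
    moreover have "(\<Sum>i<N. \<Sum>(k, l)\<in>lt_pairs N. n2 (i, k) (i, l)) = (\<Sum>(k, l)\<in>lt_pairs N. \<Sum>i<N. n2 (i, k) (i, l))"
      by (subst sum.swap) (simp add: split_def)
    ultimately show ?thesis by simp
  qed
  also have "(\<Sum>(i, j)\<in>lt_pairs N. G i j)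
      = (\<Sum>((i, j), f)\<in>lt_pairs N \<times> UNIV. \<Sum>k<N. \<Sum>l<N. (x ((i, k), (j, l), f))\<^sup>2)"
    unfolding sum_lt_pairs_UNIV_bool
    by (intro sum.cong) (auto simp: G_def n2_lex lex_less_def lt_pairs_def sum.distrib)
  also have "(\<Sum>(k, l)\<in>lt_pairs N. \<Sum>i<N. n2 (i, k) (i, l))
      = (\<Sum>((k, l), f)\<in>lt_pairs N \<times> UNIV. \<Sum>i<N. (x ((i, k), (i, l), f))\<^sup>2)"
    unfolding sum_lt_pairs_UNIV_bool
    by (intro sum.cong) (auto simp: n2_lex lex_less_def lt_pairs_def sum.distrib)
  finally show ?thesis by simp
qed

lemma ptrace2_norm_sq_herm_of:
  "ptrace2_norm_sq N (herm_of x) = (\<Sum>i<N. (\<Sum>k<N. x ((i, k), (i, k), False))\<^sup>2)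
     + 2 * (\<Sum>((i, j), f)\<in>lt_pairs N \<times> UNIV. (\<Sum>k<N. x ((i, k), (j, k), f))\<^sup>2)"
proof -
  have "ptrace2_norm_sq N (herm_of x) = (\<Sum>i<N. (cmod (\<Sum>k<N. herm_of x (i, k) (i, k)))\<^sup>2)
      + 2 * (\<Sum>(i, j)\<in>lt_pairs N. (cmod (\<Sum>k<N. herm_of x (i, k) (j, k)))\<^sup>2)"
    unfolding ptrace2_norm_sq_def
    by (rule sum_square_symmetric) (subst (2) herm_of_cnj, metis cnj_sum complex_mod_cnj)
  also have "(\<Sum>(i, j)\<in>lt_pairs N. (cmod (\<Sum>k<N. herm_of x (i, k) (j, k)))\<^sup>2)
      = (\<Sum>((i, j), f)\<in>lt_pairs N \<times> UNIV. (\<Sum>k<N. x ((i, k), (j, k), f))\<^sup>2)"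
    unfolding sum_lt_pairs_UNIV_bool
    by (intro sum.cong) (auto simp: norm_herm_of_lex_sum lex_less_def lt_pairs_def UNIV_bool)
  finally show ?thesis by (simp add: norm_herm_of_diag_sum)
qed

lemma ptrace1_norm_sq_herm_of:
  "ptrace1_norm_sq N (herm_of x) = (\<Sum>k<N. (\<Sum>i<N. x ((i, k), (i, k), False))\<^sup>2)
     + 2 * (\<Sum>((k, l), f)\<in>lt_pairs N \<times> UNIV. (\<Sum>i<N. x ((i, k), (i, l), f))\<^sup>2)"
proof -
  have "ptrace1_norm_sq N (herm_of x) = (\<Sum>k<N. (cmod (\<Sum>i<N. herm_of x (i, k) (i, k)))\<^sup>2)
      + 2 * (\<Sum>(k, l)\<in>lt_pairs N. (cmod (\<Sum>i<N. herm_of x (i, k) (i, l)))\<^sup>2)"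
    unfolding ptrace1_norm_sq_def
    by (rule sum_square_symmetric) (subst (2) herm_of_cnj, metis cnj_sum complex_mod_cnj)
  also have "(\<Sum>(k, l)\<in>lt_pairs N. (cmod (\<Sum>i<N. herm_of x (i, k) (i, l)))\<^sup>2)
      = (\<Sum>((k, l), f)\<in>lt_pairs N \<times> UNIV. (\<Sum>i<N. x ((i, k), (i, l), f))\<^sup>2)"
    unfolding sum_lt_pairs_UNIV_bool
    by (intro sum.cong) (auto simp: norm_herm_of_lex_sum lex_less_def lt_pairs_def UNIV_bool)
  finally show ?thesis by (simp add: norm_herm_of_diag_sum)
qed

datatype block = Off_first nat nat bool | Off_second nat nat bool | Diagonal

definition blocks :: "nat \<Rightarrow> block set" where
  "blocks N = (\<lambda>((i, j), f). Off_first i j f) ` (lt_pairs N \<times> UNIV)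
     \<union> (\<lambda>((k, l), f). Off_second k l f) ` (lt_pairs N \<times> UNIV) \<union> {Diagonal}"

lemma finite_blocks [simp]: "finite (blocks N)"
  by (simp add: blocks_def)

lemma (in comm_monoid_set) blocks:
  "F g (blocks N) = F (\<lambda>((i, j), f). g (Off_first i j f)) (lt_pairs N \<times> UNIV)
     \<^bold>* F (\<lambda>((k, l), f). g (Off_second k l f)) (lt_pairs N \<times> UNIV) \<^bold>* g Diagonal"
proof -
  define A where "A = (\<lambda>((i, j), f). Off_first i j f) ` (lt_pairs N \<times> UNIV)"
  define B where "B = (\<lambda>((k, l), f). Off_second k l f) ` (lt_pairs N \<times> UNIV)"
  have "F g (blocks N) = F g (A \<union> B) \<^bold>* F g {Diagonal}"
    unfolding blocks_def A_def[symmetric] B_def[symmetric]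
    by (rule union_disjoint) (auto simp: A_def B_def)
  also have "F g (A \<union> B) = F g A \<^bold>* F g B"
    by (rule union_disjoint) (auto simp: A_def B_def)
  also have "F g A = F (\<lambda>((i, j), f). g (Off_first i j f)) (lt_pairs N \<times> UNIV)"
    unfolding A_def by (subst reindex) (auto simp: inj_on_def comp_def case_prod_unfold)
  also have "F g B = F (\<lambda>((k, l), f). g (Off_second k l f)) (lt_pairs N \<times> UNIV)"
    unfolding B_def by (subst reindex) (auto simp: inj_on_def comp_def case_prod_unfold)
  finally show ?thesis by simp
qed

fun block_coords :: "nat \<Rightarrow> block \<Rightarrow> (idx \<times> idx \<times> bool) set" where
  "block_coords N (Off_first i j f) = (\<lambda>(k, l). ((i, k), (j, l), f)) ` ({..<N} \<times> {..<N})"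
| "block_coords N (Off_second k l f) = (\<lambda>i. ((i, k), (i, l), f)) ` {..<N}"
| "block_coords N Diagonal = (\<lambda>p. (p, p, False)) ` ({..<N} \<times> {..<N})"

fun block_energy :: "nat \<Rightarrow> real \<Rightarrow> block \<Rightarrow> (idx \<times> idx \<times> bool \<Rightarrow> real) \<Rightarrow> real" where
  "block_energy N lam (Off_first i j f) x =
     real N * (1 - lam) * (\<Sum>k<N. \<Sum>l<N. (x ((i, k), (j, l), f))\<^sup>2) - real N * lam * (\<Sum>k<N. x ((i, k), (j, k), f))\<^sup>2"
| "block_energy N lam (Off_second k l f) x =
     real N * (1 - lam) * (\<Sum>i<N. (x ((i, k), (i, l), f))\<^sup>2) - real N * lam * (\<Sum>i<N. x ((i, k), (i, l), f))\<^sup>2"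
| "block_energy N lam Diagonal x =
     grid_form (real N * (1 - lam) / 2) (real N * lam / 2) (real N * lam / 2) 0 {..<N} {..<N} (\<lambda>p. x (p, p, False))"

lemma sum_block_energy:
  "(\<Sum>b\<in>blocks N. block_energy N lam b x)
     = real N / 2 * (1 - lam) * hs_norm_sq N (herm_of x)
       - real N * lam / 2 * (ptrace2_norm_sq N (herm_of x) + ptrace1_norm_sq N (herm_of x))"
proof -
  have first: "(\<Sum>((i, j), f)\<in>lt_pairs N \<times> UNIV. block_energy N lam (Off_first i j f) x)
      = real N * (1 - lam) * (\<Sum>((i, j), f)\<in>lt_pairs N \<times> UNIV. \<Sum>k<N. \<Sum>l<N. (x ((i, k), (j, l), f))\<^sup>2)
        - real N * lam * (\<Sum>((i, j), f)\<in>lt_pairs N \<times> UNIV. (\<Sum>k<N. x ((i, k), (j, k), f))\<^sup>2)"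
    by (simp add: case_prod_unfold sum_subtractf flip: sum_distrib_left)
  have second: "(\<Sum>((k, l), f)\<in>lt_pairs N \<times> UNIV. block_energy N lam (Off_second k l f) x)
      = real N * (1 - lam) * (\<Sum>((k, l), f)\<in>lt_pairs N \<times> UNIV. \<Sum>i<N. (x ((i, k), (i, l), f))\<^sup>2)
        - real N * lam * (\<Sum>((k, l), f)\<in>lt_pairs N \<times> UNIV. (\<Sum>i<N. x ((i, k), (i, l), f))\<^sup>2)"
    by (simp add: case_prod_unfold sum_subtractf flip: sum_distrib_left)
  have diagonal: "block_energy N lam Diagonal x
      = real N * (1 - lam) / 2 * (\<Sum>i<N. \<Sum>k<N. (x ((i, k), (i, k), False))\<^sup>2)
        - real N * lam / 2 * ((\<Sum>i<N. (\<Sum>k<N. x ((i, k), (i, k), False))\<^sup>2)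
                              + (\<Sum>k<N. (\<Sum>i<N. x ((i, k), (i, k), False))\<^sup>2))"
    by (simp add: grid_form_def algebra_simps)
  show ?thesis
    unfolding sum.blocks first second diagonal hs_norm_sq_herm_of ptrace2_norm_sq_herm_of ptrace1_norm_sq_herm_of
    by (simp add: field_simps)
qed

lemma exponent_herm_of:
  "- (of_nat N / 2) * tr_sq N (herm_of x) + V4 N lam (herm_of x)
     = - of_real (\<Sum>b\<in>blocks N. block_energy N lam b x)"
  unfolding sum_block_energy tr_sq_hermitian[OF herm_of_cnj] V4_hermitian[OF herm_of_cnj]
  by (simp add: field_simps)

section \<open>The partition function as a product of block integrals\<close>

fun block_of :: "idx \<times> idx \<times> bool \<Rightarrow> block" where
  "block_of ((i, k), (j, l), f) =
     (if i \<noteq> j then Off_first i j f else if k \<noteq> l then Off_second k l f else Diagonal)"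

lemma block_of_block_coords: "b \<in> blocks N \<Longrightarrow> c \<in> block_coords N b \<Longrightarrow> block_of c = b"
  by (cases b) (auto simp: blocks_def lt_pairs_def)

lemma coords_eq_UNION_block_coords: "coords N = (\<Union>b\<in>blocks N. block_coords N b)"
proof (intro equalityI subsetI)
  fix c assume "c \<in> coords N"
  then obtain p q f where pq: "c = (p, q, f)" "p \<in> idxs N" "q \<in> idxs N" "(p = q \<and> f = False) \<or> lex_less p q"
    unfolding coords_def by blast
  obtain i k j l where "p = (i, k)" "q = (j, l)" by (cases p, cases q)
  with pq have c: "c = ((i, k), (j, l), f)" "i < N" "k < N" "j < N" "l < N"
    and cases: "(i = j \<and> k = l \<and> f = False) \<or> lex_less (i, k) (j, l)"
    by (auto simp: idxs_def)
  have "block_of c \<in> blocks N \<and> c \<in> block_coords N (block_of c)"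
  proof (cases "i = j")
    case True
    with cases c have "k = l \<and> f = False \<or> k < l" by (auto simp: lex_less_def)
    then show ?thesis
    proof
      assume "k = l \<and> f = False"
      then show ?thesis using True c by (auto simp: blocks_def)
    next
      assume "k < l"
      then have "Off_second k l f \<in> blocks N" using c by (auto simp: blocks_def lt_pairs_def image_iff)
      then show ?thesis using True c \<open>k < l\<close> by auto
    qed
  next
    case False
    with cases have "i < j" by (auto simp: lex_less_def)
    then have "Off_first i j f \<in> blocks N" using c by (auto simp: blocks_def lt_pairs_def image_iff)
    then show ?thesis using False c by (auto simp: image_iff)
  qed
  then show "c \<in> (\<Union>b\<in>blocks N. block_coords N b)" by blast
next
  fix c assume "c \<in> (\<Union>b\<in>blocks N. block_coords N b)"
  then show "c \<in> coords N"
    by (auto simp: blocks_def lt_pairs_def coords_def idxs_def lex_less_def)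
qed

lemma disjoint_family_block_coords: "disjoint_family_on (block_coords N) (blocks N)"
  unfolding disjoint_family_on_def using block_of_block_coords by blast

lemma finite_block_coords [simp]: "finite (block_coords N b)"
  by (cases b) auto

lemma block_energy_Off_first:
  "block_energy N lam (Off_first i j f) x
     = rank_one_form (real N * (1 - lam)) (real N * lam) (\<lambda>(k, l). if k = l then 1 else 0) (\<lambda>_. 0)
         ({..<N} \<times> {..<N}) (\<lambda>kl. x ((\<lambda>(k, l). ((i, k), (j, l), f)) kl))"
proof -
  have trace: "(\<Sum>kl\<in>{..<N} \<times> {..<N}. (case kl of (k, l) \<Rightarrow> if k = l then 1 else 0) * g kl) = (\<Sum>k<N. g (k, k))"
    for g :: "nat \<times> nat \<Rightarrow> real"
  proof -
    have "(\<Sum>kl\<in>{..<N} \<times> {..<N}. (case kl of (k, l) \<Rightarrow> if k = l then 1 else 0) * g kl)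
        = (\<Sum>k<N. \<Sum>l<N. if l = k then g (k, l) else 0)"
      by (subst sum.cartesian_product') (intro sum.cong; auto)
    then show ?thesis by simp
  qed
  show ?thesis
    unfolding rank_one_form_def trace by (simp add: sum.cartesian_product')
qed

lemma block_energy_Off_second:
  "block_energy N lam (Off_second k l f) x
     = rank_one_form (real N * (1 - lam)) (real N * lam) (\<lambda>_. 1) (\<lambda>_. 0) {..<N} (\<lambda>i. x ((i, k), (i, l), f))"
  by (simp add: rank_one_form_def)

lemma borel_measurable_block_energy:
  "(\<lambda>x. block_energy N lam b x) \<in> borel_measurable (PiM (block_coords N b) (\<lambda>_. lborel))"
  by (cases b) (simp_all only: block_coords.simps block_energy_Off_first block_energy_Off_second
      block_energy.simps(3) borel_measurable_rank_one_form borel_measurable_grid_form)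

lemma block_energy_local:
  assumes "\<And>c. c \<in> block_coords N b \<Longrightarrow> x c = y c"
  shows "block_energy N lam b x = block_energy N lam b y"
proof (cases b)
  case (Off_first i j f)
  show ?thesis
    using assms unfolding Off_first block_energy_Off_first by (intro rank_one_form_cong) auto
next
  case (Off_second k l f)
  show ?thesis
    using assms unfolding Off_second block_energy_Off_second by (intro rank_one_form_cong) auto
next
  case Diagonal
  show ?thesis
    using assms unfolding Diagonal by simp (intro grid_form_cong, auto)
qed

lemma coupling_bounds:
  fixes N :: nat and lam :: real
  assumes "(1 + 2 * real N) * lam < 1"
  shows "0 < 1 - lam" "0 < 1 - (1 + real N) * lam" "0 < 1 - (1 + 2 * real N) * lam"
proof -
  show "0 < 1 - (1 + 2 * real N) * lam" using assms by simp
  then show "0 < 1 - (1 + real N) * lam"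
    using diff_mult_pos_of_le[of "1 + real N" "1 + 2 * real N" 1 lam] by simp
  then show "0 < 1 - lam"
    using diff_mult_pos_of_le[of 1 "1 + real N" 1 lam] by simp
qed

fun block_dim :: "nat \<Rightarrow> block \<Rightarrow> nat" where
  "block_dim N (Off_first i j f) = N * N"
| "block_dim N (Off_second k l f) = N"
| "block_dim N Diagonal = N * N"

fun block_det :: "nat \<Rightarrow> real \<Rightarrow> block \<Rightarrow> real" where
  "block_det N lam (Off_first i j f) = real N ^ (N * N) * (1 - lam) ^ (N * N - 1) * (1 - (1 + real N) * lam)"
| "block_det N lam (Off_second k l f) = real N ^ N * (1 - lam) ^ (N - 1) * (1 - (1 + real N) * lam)"
| "block_det N lam Diagonal = (real N / 2) ^ (N * N) * (1 - lam) ^ ((N - 1) * (N - 1))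
     * (1 - (1 + real N) * lam) ^ (2 * (N - 1)) * (1 - (1 + 2 * real N) * lam)"

lemma block_det_pos:
  assumes "N \<ge> 1" "(1 + 2 * real N) * lam < 1"
  shows "block_det N lam b > 0"
  using coupling_bounds[OF assms(2)] assms(1) by (cases b) auto

lemma rank_one_block_det:
  fixes lam :: real
  assumes "n > 0"
  shows "(real N * (1 - lam)) ^ (n - 1) * (real N * (1 - lam) - real N * lam * real N)
       = real N ^ n * (1 - lam) ^ (n - 1) * (1 - (1 + real N) * lam)"
proof -
  obtain m where n: "n = Suc m" using assms by (cases n) auto
  have "real N * (1 - lam) - real N * lam * real N = real N * (1 - (1 + real N) * lam)"
    by (simp add: algebra_simps)
  then show ?thesis
    unfolding n by (simp add: power_mult_distrib mult_ac)
qed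

lemma power_grid_det_collect:
  fixes h A B C :: real
  assumes "A \<noteq> 0" "B \<noteq> 0"
  shows "(h * A) ^ (Suc m * m) * (h * B) ^ Suc m * (B / A) ^ m * (C / B)
       = h ^ (Suc m * Suc m) * A ^ (m * m) * B ^ (2 * m) * C"
proof -
  have A: "A ^ (Suc m * m) = A ^ (m * m) * A ^ m"
    by (simp add: power_add[symmetric] add.commute)
  have "(h * A) ^ (Suc m * m) * (h * B) ^ Suc m * (B / A) ^ m * (C / B)
      = (h ^ (Suc m * m) * h ^ Suc m) * A ^ (m * m) * (A ^ m * (B / A) ^ m) * B ^ m * (B * (C / B))"
    unfolding power_mult_distrib A power_Suc[of B] by (simp only: mult_ac)
  also have "\<dots> = h ^ (Suc m * Suc m) * A ^ (m * m) * B ^ m * B ^ m * C"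
    using assms by (simp add: power_divide power_add[symmetric] algebra_simps)
  also have "\<dots> = h ^ (Suc m * Suc m) * A ^ (m * m) * B ^ (2 * m) * C"
    by (simp add: mult_2 power_add)
  finally show ?thesis .
qed

lemma grid_det_block_det:
  fixes lam :: real
  assumes "N \<ge> 1" "lam \<noteq> 1" "1 - (1 + real N) * lam \<noteq> 0"
  shows "grid_det (real N * (1 - lam) / 2) (real N * lam / 2) N N (real N * lam / 2) (real N * lam / 2)
       = block_det N lam Diagonal"
proof -
  obtain m where N: "N = Suc m" using assms(1) by (cases N) auto
  define h where "h = real N / 2"
  define L1 where "L1 = 1 - lam"
  define L2 where "L2 = 1 - (1 + real N) * lam"
  define L3 where "L3 = 1 - (1 + 2 * real N) * lam"
  have L: "L1 \<noteq> 0" "L2 \<noteq> 0" and h: "h \<noteq> 0" using assms by (simp_all add: L1_def L2_def h_def)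
  have a: "real N * (1 - lam) / 2 = h * L1"
    and t: "h * L1 - real N * (real N * lam / 2) = h * L2"
    and s: "h * L2 - real N * (real N * lam / 2) = h * L3"
    by (simp_all add: h_def L1_def L2_def L3_def field_simps)
  have "grid_det (real N * (1 - lam) / 2) (real N * lam / 2) N N (real N * lam / 2) (real N * lam / 2)
      = (h * L1) ^ (N * (N - 1)) * (h * L2) ^ N * ((h * L2) / (h * L1)) ^ (N - 1) * ((h * L3) / (h * L2))"
    unfolding grid_det_def by (simp only: a t s)
  also have "\<dots> = (h * L1) ^ (Suc m * m) * (h * L2) ^ Suc m * (L2 / L1) ^ m * (L3 / L2)"
    using h by (simp add: N)
  also have "\<dots> = h ^ (N * N) * L1 ^ (m * m) * L2 ^ (2 * m) * L3"
    unfolding N by (rule power_grid_det_collect[OF L])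
  finally show ?thesis
    by (simp add: h_def L1_def L2_def L3_def N)
qed

lemma rank_one_block_pos:
  assumes "N \<ge> 1" "(1 + 2 * real N) * lam < 1"
  shows "0 < real N * (1 - lam)" "0 < real N * (1 - lam) - real N * lam * real N"
proof -
  have "real N * (1 - lam) - real N * lam * real N = real N * (1 - (1 + real N) * lam)"
    by (simp add: algebra_simps)
  then show "0 < real N * (1 - lam)" "0 < real N * (1 - lam) - real N * lam * real N"
    using coupling_bounds[OF assms(2)] assms(1) by simp_all
qed

lemma nn_integral_exp_neg_block_energy_Off_first:
  assumes "N \<ge> 1" "(1 + 2 * real N) * lam < 1"
  shows "(\<integral>\<^sup>+x. ennreal (exp (- block_energy N lam (Off_first i j f) x)) \<partial>PiM (block_coords N (Off_first i j f)) (\<lambda>_. lborel))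
       = ennreal (sqrt (pi ^ (N * N) / block_det N lam (Off_first i j f)))"
proof -
  have "(\<Sum>kl\<in>{..<N} \<times> {..<N}. ((\<lambda>(k, l). if k = l then 1 else 0) kl :: real)\<^sup>2)
      = (\<Sum>k<N. \<Sum>l<N. if l = k then 1 else 0)"
    by (subst sum.cartesian_product') (intro sum.cong; auto)
  then have "(\<Sum>kl\<in>{..<N} \<times> {..<N}. ((\<lambda>(k, l). if k = l then 1 else 0) kl :: real)\<^sup>2) = real N"
    by simp
  moreover have "inj_on (\<lambda>(k, l). ((i, k), (j, l), f)) ({..<N} \<times> {..<N})"
    by (auto simp: inj_on_def)
  ultimately show ?thesis
    unfolding block_coords.simps block_energy_Off_first block_det.simps
    using rank_one_block_pos[OF assms] assms(1) rank_one_block_det[of "N * N" N lam]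
    by (subst nn_integral_exp_neg_rank_one_form_centered) auto
qed

lemma nn_integral_exp_neg_block_energy_Off_second:
  assumes "N \<ge> 1" "(1 + 2 * real N) * lam < 1"
  shows "(\<integral>\<^sup>+x. ennreal (exp (- block_energy N lam (Off_second k l f) x)) \<partial>PiM (block_coords N (Off_second k l f)) (\<lambda>_. lborel))
       = ennreal (sqrt (pi ^ N / block_det N lam (Off_second k l f)))"
proof -
  have "inj_on (\<lambda>i. ((i, k), (i, l), f)) {..<N}"
    by (auto simp: inj_on_def)
  then show ?thesis
    unfolding block_coords.simps block_energy_Off_second block_det.simps
    using rank_one_block_pos[OF assms] assms(1) rank_one_block_det[of N N lam]
    by (subst nn_integral_exp_neg_rank_one_form_centered) (auto simp: lessThan_empty_iff)
qed

lemma nn_integral_exp_neg_block_energy_Diagonal: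
  assumes N: "N \<ge> 1" and lam: "(1 + 2 * real N) * lam < 1"
  shows "(\<integral>\<^sup>+x. ennreal (exp (- block_energy N lam Diagonal x)) \<partial>PiM (block_coords N Diagonal) (\<lambda>_. lborel))
       = ennreal (sqrt (pi ^ (N * N) / block_det N lam Diagonal))"
proof -
  note L = coupling_bounds[OF lam]
  let ?a = "real N * (1 - lam) / 2" and ?b = "real N * lam / 2"
  have e: "?a - real N * ?b = real N / 2 * (1 - (1 + real N) * lam)"
    "real N / 2 * (1 - (1 + real N) * lam) - real N * (?b + real N * 0)
       = real N / 2 * (1 - (1 + 2 * real N) * lam)"
    by (simp_all add: field_simps)
  have "0 < real N / 2 * (1 - (1 + real N) * lam)" "0 < real N / 2 * (1 - (1 + 2 * real N) * lam)"
    using L N by simp_all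
  then have "?a - real (card {..<N}) * ?b > 0"
    "?a - real (card {..<N}) * ?b - real (card {..<N}) * (?b + real (card {..<N}) * 0) > 0"
    unfolding card_lessThan e .
  moreover have "inj_on (\<lambda>p. (p, p, False)) ({..<N} \<times> {..<N})"
    by (auto simp: inj_on_def)
  moreover have "?a > 0" "{..<N} \<noteq> {}"
    using L N by (auto simp: lessThan_empty_iff)
  ultimately have "(\<integral>\<^sup>+x. ennreal (exp (- block_energy N lam Diagonal x)) \<partial>PiM (block_coords N Diagonal) (\<lambda>_. lborel))
      = ennreal (sqrt (pi ^ (N * N) / grid_det ?a ?b N N ?b (?b + real N * 0)))"
    unfolding block_energy.simps block_coords.simps
    by (subst nn_integral_exp_neg_grid_form) auto
  then show ?thesis
    using L N by (simp add: grid_det_block_det)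
qed

lemma nn_integral_exp_neg_block_energy:
  assumes "N \<ge> 1" "(1 + 2 * real N) * lam < 1"
  shows "(\<integral>\<^sup>+x. ennreal (exp (- block_energy N lam b x)) \<partial>PiM (block_coords N b) (\<lambda>_. lborel))
       = ennreal (sqrt (pi ^ block_dim N b / block_det N lam b))"
  using nn_integral_exp_neg_block_energy_Off_first[OF assms] nn_integral_exp_neg_block_energy_Off_second[OF assms]
    nn_integral_exp_neg_block_energy_Diagonal[OF assms]
  by (cases b) simp_all

lemma Z_HT_integrand:
  "exp (- (of_nat N / 2) * tr_sq N (herm_of x) + V4 N lam (herm_of x))
     = of_real (\<Prod>b\<in>blocks N. exp (- block_energy N lam b x))"
proof -
  have "exp (- (\<Sum>b\<in>blocks N. block_energy N lam b x)) = (\<Prod>b\<in>blocks N. exp (- block_energy N lam b x))"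
    unfolding sum_negf[symmetric] by (simp add: exp_sum)
  then show ?thesis
    unfolding exponent_herm_of of_real_minus[symmetric] exp_of_real by simp
qed

lemma borel_measurable_exp_neg_block_energy:
  "(\<lambda>x. exp (- block_energy N lam b x)) \<in> borel_measurable (PiM (block_coords N b) (\<lambda>_. lborel))"
  by (rule measurable_compose[OF borel_measurable_block_energy, where g="\<lambda>t. exp (- t)"]) measurable

lemma Z_HT_eq_prod_blocks:
  assumes N: "N \<ge> 1" and lam: "(1 + 2 * real N) * lam < 1"
  shows "Z_HT N lam = of_real (\<Prod>b\<in>blocks N. sqrt (pi ^ block_dim N b / block_det N lam b))"
proof -
  interpret product_sigma_finite "\<lambda>_. lborel :: real measure" by standard
  let ?M = "PiM (coords N) (\<lambda>_. lborel)"
  define F where "F x = (\<Prod>b\<in>blocks N. exp (- block_energy N lam b x))" for x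
  have F_meas: "F \<in> borel_measurable ?M"
    unfolding F_def
  proof (rule borel_measurable_prod)
    fix b assume "b \<in> blocks N"
    then have "block_coords N b \<subseteq> coords N"
      unfolding coords_eq_UNION_block_coords by blast
    then show "(\<lambda>x. exp (- block_energy N lam b x)) \<in> borel_measurable ?M"
      by (rule measurable_PiM_local[OF _ borel_measurable_exp_neg_block_energy]) (metis block_energy_local)
  qed
  have nonneg: "0 \<le> sqrt (pi ^ block_dim N b / block_det N lam b)" for b
    using block_det_pos[OF N lam, of b] by simp
  have "(\<integral>\<^sup>+x. ennreal (F x) \<partial>?M) = (\<integral>\<^sup>+x. (\<Prod>b\<in>blocks N. ennreal (exp (- block_energy N lam b x))) \<partial>?M)"
    unfolding F_def by (simp add: prod_ennreal)
  also have "\<dots> = (\<Prod>b\<in>blocks N. \<integral>\<^sup>+x. ennreal (exp (- block_energy N lam b x)) \<partial>PiM (block_coords N b) (\<lambda>_. lborel))"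
    unfolding coords_eq_UNION_block_coords
    by (rule nn_integral_PiM_UNION_prod[OF finite_blocks finite_block_coords disjoint_family_block_coords])
      (rule measurable_compose[OF borel_measurable_exp_neg_block_energy measurable_ennreal], metis block_energy_local)
  also have "\<dots> = ennreal (\<Prod>b\<in>blocks N. sqrt (pi ^ block_dim N b / block_det N lam b))"
    using nn_integral_exp_neg_block_energy[OF N lam] nonneg by (simp add: prod_ennreal)
  finally have "integral\<^sup>L ?M F = (\<Prod>b\<in>blocks N. sqrt (pi ^ block_dim N b / block_det N lam b))"
    using F_meas nonneg by (subst integral_eq_nn_integral) (auto simp: F_def prod_nonneg)
  then show ?thesis
    unfolding Z_HT_def Z_HT_integrand F_def[symmetric] by simp
qed

lemma prod_block_det:
  assumes "N \<ge> 1"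
  shows "(\<Prod>b\<in>blocks N. block_det N lam b) = (\<Prod>b\<in>blocks N. block_det N 0 b)
     * (1 - lam) ^ ((N\<^sup>2 - 1)\<^sup>2) * (1 - (1 + real N) * lam) ^ (2 * (N\<^sup>2 - 1)) * (1 - (1 + 2 * real N) * lam)"
proof -
  obtain m where N: "N = Suc m" using assms by (cases N) auto
  define M where "M = N * (N - 1)"
  have card: "card (lt_pairs N \<times> (UNIV :: bool set)) = M"
    using card_lt_pairs[of N] by (simp add: card_cartesian_product M_def)
  have prod: "(\<Prod>b\<in>blocks N. block_det N l b) = block_det N l (Off_first 0 0 False) ^ M
      * block_det N l (Off_second 0 0 False) ^ M * block_det N l Diagonal" for l
    unfolding prod.blocks by (simp add: case_prod_unfold card)
  define L1 where "L1 = 1 - lam"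
  define L2 where "L2 = 1 - (1 + real N) * lam"
  define L3 where "L3 = 1 - (1 + 2 * real N) * lam"
  have "(L1 ^ (N * N - 1) * L2) ^ M * (L1 ^ (N - 1) * L2) ^ M * (L1 ^ ((N - 1) * (N - 1)) * L2 ^ (2 * (N - 1)) * L3)
      = L1 ^ ((N * N - 1) * M + (N - 1) * M + (N - 1) * (N - 1)) * L2 ^ (M + M + 2 * (N - 1)) * L3"
    by (simp only: power_mult_distrib power_add power_mult[symmetric] mult_ac)
  also have "(N * N - 1) * M + (N - 1) * M + (N - 1) * (N - 1) = (N\<^sup>2 - 1)\<^sup>2"
    unfolding M_def N by (simp add: power2_eq_square algebra_simps)
  also have "M + M + 2 * (N - 1) = 2 * (N\<^sup>2 - 1)"
    unfolding M_def N by (simp add: power2_eq_square algebra_simps)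
  finally show ?thesis
    unfolding prod by (simp add: L1_def L2_def L3_def power_mult_distrib mult_ac)
qed

lemma prod_real_sqrt: "(\<Prod>x\<in>A. sqrt (f x)) = sqrt (\<Prod>x\<in>A. f x)"
  by (induction A rule: infinite_finite_induct) (simp_all add: real_sqrt_mult)

lemma prod_sqrt_divide_ratio:
  fixes c d d' :: "'a \<Rightarrow> real"
  assumes "\<And>x. x \<in> A \<Longrightarrow> c x > 0" "\<And>x. x \<in> A \<Longrightarrow> d x > 0" "\<And>x. x \<in> A \<Longrightarrow> d' x > 0"
  shows "(\<Prod>x\<in>A. sqrt (c x / d x)) / (\<Prod>x\<in>A. sqrt (c x / d' x)) = sqrt ((\<Prod>x\<in>A. d' x) / (\<Prod>x\<in>A. d x))"
proof -
  have "sqrt (c x / d x) / sqrt (c x / d' x) = sqrt (d' x / d x)" if "x \<in> A" for x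
    using assms[OF that] by (simp add: real_sqrt_divide[symmetric] field_simps)
  then have "(\<Prod>x\<in>A. sqrt (c x / d x)) / (\<Prod>x\<in>A. sqrt (c x / d' x)) = (\<Prod>x\<in>A. sqrt (d' x / d x))"
    unfolding prod_dividef[symmetric] by (rule prod.cong[OF refl])
  then show ?thesis
    by (simp only: prod_real_sqrt prod_dividef)
qed

lemma sqrt_inverse_eq_powr:
  fixes L1 L2 L3 :: real and e :: nat
  assumes "L1 > 0" "L2 > 0" "L3 > 0"
  shows "sqrt (1 / (L1 ^ (e\<^sup>2) * L2 ^ (2 * e) * L3))
       = L1 powr (- (1/2) * real e ^ 2) * L2 powr (- real e) * L3 powr (- 1/2)" (is "?l = ?r")
proof -
  have "?r\<^sup>2 = L1 powr (- real (e\<^sup>2)) * L2 powr (- real (2 * e)) * L3 powr (- 1)"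
    using assms by (simp add: power_mult_distrib powr_power)
  also have "\<dots> = ?l\<^sup>2"
    using assms by (simp add: powr_minus powr_realpow inverse_eq_divide del: of_nat_power of_nat_mult)
  finally show ?thesis
    using assms by (subst power2_eq_iff_nonneg[symmetric]) auto
qed

lemma Z_HT_ratio:
  assumes N: "N \<ge> 1" and lam: "(1 + 2 * real N) * lam < 1"
  shows "Z_HT N lam / Z_HT N 0 = of_real (sqrt (1 / ((1 - lam) ^ ((N\<^sup>2 - 1)\<^sup>2)
           * (1 - (1 + real N) * lam) ^ (2 * (N\<^sup>2 - 1)) * (1 - (1 + 2 * real N) * lam))))"
proof -
  have zero: "(1 + 2 * real N) * 0 < (1::real)" by simp
  have det0: "(\<Prod>b\<in>blocks N. block_det N 0 b) > 0"
    using block_det_pos[OF N zero] by (simp add: prod_pos)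
  have "Z_HT N lam / Z_HT N 0
      = of_real ((\<Prod>b\<in>blocks N. sqrt (pi ^ block_dim N b / block_det N lam b))
                 / (\<Prod>b\<in>blocks N. sqrt (pi ^ block_dim N b / block_det N 0 b)))"
    unfolding Z_HT_eq_prod_blocks[OF N lam] Z_HT_eq_prod_blocks[OF N zero] by simp
  also have "\<dots> = of_real (sqrt ((\<Prod>b\<in>blocks N. block_det N 0 b) / (\<Prod>b\<in>blocks N. block_det N lam b)))"
    using block_det_pos[OF N lam] block_det_pos[OF N zero]
    by (subst prod_sqrt_divide_ratio) auto
  also have "(\<Prod>b\<in>blocks N. block_det N 0 b) / (\<Prod>b\<in>blocks N. block_det N lam b)
      = 1 / ((1 - lam) ^ ((N\<^sup>2 - 1)\<^sup>2) * (1 - (1 + real N) * lam) ^ (2 * (N\<^sup>2 - 1)) * (1 - (1 + 2 * real N) * lam))"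
  proof -
    have "P / (P * X) = 1 / X" if "P > 0" for P X :: real
      using that by simp
    then show ?thesis
      unfolding prod_block_det[OF N, of lam] using det0 by (simp only: mult.assoc)
  qed
  finally show ?thesis .
qed

theorem propositionE2:
  fixes N :: nat and lam :: real
  assumes "N \<ge> 1" and "lam < 1 / (1 + 2 * real N)"
  shows "Z_HT N lam / Z_HT N 0 =
    complex_of_real ((1 - lam) powr (- (1/2) * (real N ^ 2 - 1) ^ 2)
      * (1 - (1 + real N) * lam) powr (- (real N ^ 2 - 1))
      * (1 - (1 + 2 * real N) * lam) powr (- 1/2))"
proof -
  have lam: "(1 + 2 * real N) * lam < 1"
    using assms(2) by (simp add: field_simps)
  have "real (N\<^sup>2 - 1) = real N ^ 2 - 1"
    using assms(1) by (simp add: of_nat_diff)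
  then show ?thesis
    unfolding Z_HT_ratio[OF assms(1) lam]
    using sqrt_inverse_eq_powr[OF coupling_bounds[OF lam], of "N\<^sup>2 - 1"] by simp
qed

end
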